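(* Let $X\subseteq\mathbb{R}^m$ be compact, $\mathsf{H}$ a separable Hilbert space, and $\mathcal{P}\in\mathcal{B}_2(L^2(X;\mathsf{H}))$ Hermitian and non-negative definite with continuous kernel $P\in C^0(X\times X;\mathcal{B}_2(\mathsf{H}))$. Let $\{(\lambda_\ell,\phi_\ell)\}_\ell$ be the eigenpairs of $\mathcal{P}$ with $\{\phi_\ell\}$ orthonormal and continuous. If the series $$R(x,y)=\sum_{\ell=1}^\infty\lambda_\ell\,\phi_\ell(x)\otimes\phi_\ell(y)$$ converges in $\mathcal{B}_2(\mathsf{H})$ uniformly in either $x$ or $y$, then $P(x,y)=R(x,y)$ for all $(x,y)\in X\times X$.
   Context: For $a,b\in\mathsf{H}$ (inner product conjugate linear in the first slot), $a\otimes b$ is the rank-one operator $(a\otimes b)h=\langle b,h\rangle_{\mathsf{H}}a$.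
   Formalization: X is also such that every nonempty relatively open subset of X has positive Lebesgue measure. The statement above fails without it. *)

theory Defs
  imports "HOL-Analysis.Analysis"
begin

text \<open>The distribution has no class of complex inner product spaces, so we introduce one.
  The inner product is conjugate linear in the first slot and linear in the second.\<close>

class complex_inner = real_normed_vector +
  fixes scaleC :: "complex \<Rightarrow> 'a \<Rightarrow> 'a"
  fixes cinner :: "'a \<Rightarrow> 'a \<Rightarrow> complex"
  assumes scaleC_of_real: "scaleC (complex_of_real r) x = scaleR r x"
  assumes scaleC_add_right: "scaleC a (x + y) = scaleC a x + scaleC a y"
  assumes scaleC_add_left: "scaleC (a + b) x = scaleC a x + scaleC b x"
  assumes scaleC_scaleC: "scaleC a (scaleC b x) = scaleC (a * b) x"
  assumes norm_scaleC: "norm (scaleC a x) = cmod a * norm x"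
  assumes cinner_commute: "cinner x y = cnj (cinner y x)"
  assumes cinner_add_right: "cinner x (y + z) = cinner x y + cinner x z"
  assumes cinner_scaleC_right: "cinner x (scaleC a y) = a * cinner x y"
  assumes cinner_self: "cinner x x = complex_of_real ((norm x)\<^sup>2)"

definition bounded_clinear :: "('a::complex_inner \<Rightarrow> 'b::complex_inner) \<Rightarrow> bool" where
  "bounded_clinear T \<longleftrightarrow> bounded_linear T \<and> (\<forall>c x. T (scaleC c x) = scaleC c (T x))"

definition is_onb :: "'a::complex_inner set \<Rightarrow> bool" where
  "is_onb B \<longleftrightarrow> (\<forall>e\<in>B. norm e = 1) \<and> (\<forall>e\<in>B. \<forall>f\<in>B. e \<noteq> f \<longrightarrow> cinner e f = 0)
     \<and> (\<forall>x. (\<forall>e\<in>B. cinner e x = 0) \<longrightarrow> x = 0)"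

definition hilbert_schmidt :: "('a::complex_inner \<Rightarrow> 'a) \<Rightarrow> bool" where
  "hilbert_schmidt T \<longleftrightarrow> bounded_clinear T \<and>
     (\<exists>B. is_onb B \<and> (\<lambda>e. (norm (T e))\<^sup>2) summable_on B)"

definition hs_norm :: "('a::complex_inner \<Rightarrow> 'a) \<Rightarrow> real" where
  "hs_norm T = sqrt (\<Sum>\<^sub>\<infinity>e\<in>(SOME B. is_onb B). (norm (T e))\<^sup>2)"

text \<open>Rank-one operator (a \<otimes> b) h = \<langle>b,h\<rangle> a.\<close>
definition rank1 :: "'a::complex_inner \<Rightarrow> 'a \<Rightarrow> 'a \<Rightarrow> 'a" where
  "rank1 a b = (\<lambda>h. scaleC (cinner b h) a)"

definition L2 :: "'a::euclidean_space set \<Rightarrow> ('a \<Rightarrow> 'h::{complex_inner,banach,second_countable_topology}) set" where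
  "L2 X = {f. f \<in> borel_measurable (lebesgue_on X) \<and>
                integrable (lebesgue_on X) (\<lambda>x. (norm (f x))\<^sup>2)}"

definition L2_inner :: "'a::euclidean_space set \<Rightarrow> ('a \<Rightarrow> 'h::{complex_inner,banach,second_countable_topology})
    \<Rightarrow> ('a \<Rightarrow> 'h) \<Rightarrow> complex" where
  "L2_inner X f g = (\<integral>x. cinner (f x) (g x) \<partial>lebesgue_on X)"

definition kernel_op :: "'a::euclidean_space set \<Rightarrow> ('a \<Rightarrow> 'a \<Rightarrow> 'h \<Rightarrow> 'h)
    \<Rightarrow> ('a \<Rightarrow> 'h::{complex_inner,banach,second_countable_topology}) \<Rightarrow> 'a \<Rightarrow> 'h" where
  "kernel_op X P f = (\<lambda>x. \<integral>y. P x y (f y) \<partial>lebesgue_on X)"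

end

(*
  Fix z in X and h in H, and compare the continuous column K(y) = P(y,z) h with the uniform
  limit Q of the continuous partial sums of  sum_l lam_l <phi_l(z), h> phi_l(y).  Both have the
  Fourier coefficients lam_l <phi_l(z), h>: for Q by orthonormality, for K by testing the
  Hermitian operator against normalized indicators of balls shrinking to z, an approximate
  identity that exists because every relatively open subset of X has positive measure.  So
  u = K - Q is orthogonal to every phi_l, completeness of the eigensystem gives P u = 0, and
  therefore <K, u> = lim <P delta_eps, u> = lim <delta_eps, P u> = 0 and <Q, u> = 0.  Hence
  ||u|| = 0 and, u being continuous, K = Q on X.

  If the series converges uniformly in x, this is applied at z = y.  If it converges uniformly
  in y, the adjoint series  sum_l lam_l <phi_l(x), a> phi_l(y)  is uniformly Cauchy, the column
  argument at z = x identifies its limit with P(y,x) a, and the pointwise symmetry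
  <a, P(x,y) b> = <P(y,x) a, b> transfers the identity.  Throughout, convergence in
  Hilbert-Schmidt norm is used through the bound ||T h|| <= ||T||_HS ||h||, which needs the
  Hilbert-Schmidt norm to be independent of the orthonormal basis.
*)

theory Submission
  imports Defs
begin

section \<open>Complex inner product spaces\<close>

declare norm_scaleC [simp]

lemma scaleC_zero_right [simp]: "scaleC a (0::'a::complex_inner) = 0"
  using scaleC_add_right[of a 0 0] by simp

lemma scaleC_minus_one [simp]: "scaleC (- 1) (x::'a::complex_inner) = - x"
  using scaleC_of_real[of "- 1" x] by simp

lemma scaleC_scaleR_commute: "scaleC a (r *\<^sub>R x) = r *\<^sub>R scaleC a (x::'a::complex_inner)"
  by (metis scaleC_of_real scaleC_scaleC mult.commute)

lemma cinner_zero_right [simp]: "cinner x (0::'a::complex_inner) = 0"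
  using cinner_add_right[of x 0 0] by simp

lemma cinner_zero_left [simp]: "cinner (0::'a::complex_inner) x = 0"
  using cinner_commute[of 0 x] by simp

lemma cinner_add_left: "cinner (x + y) z = cinner x z + cinner y (z::'a::complex_inner)"
  by (metis cinner_add_right cinner_commute complex_cnj_add)

lemma cinner_scaleC_left: "cinner (scaleC a x) y = cnj a * cinner x (y::'a::complex_inner)"
  by (metis cinner_commute cinner_scaleC_right complex_cnj_mult)

lemma cinner_minus_right: "cinner x (- y) = - cinner x (y::'a::complex_inner)"
  using cinner_scaleC_right[of x "- 1" y] by simp

lemma cinner_minus_left: "cinner (- x) y = - cinner x (y::'a::complex_inner)"
  using cinner_scaleC_left[of "- 1" x y] by simp

lemma cinner_diff_right: "cinner x (y - z) = cinner x y - cinner x (z::'a::complex_inner)"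
  by (simp only: diff_conv_add_uminus cinner_add_right cinner_minus_right)

lemma cinner_diff_left: "cinner (x - y) z = cinner x z - cinner y (z::'a::complex_inner)"
  by (simp only: diff_conv_add_uminus cinner_add_left cinner_minus_left)

lemma cinner_sum_right: "cinner x (\<Sum>i\<in>I. f i) = (\<Sum>i\<in>I. cinner x (f i :: 'a::complex_inner))"
  by (induction I rule: infinite_finite_induct) (auto simp: cinner_add_right)

lemma cinner_sum_left: "cinner (\<Sum>i\<in>I. f i) x = (\<Sum>i\<in>I. cinner (f i) (x::'a::complex_inner))"
  by (induction I rule: infinite_finite_induct) (auto simp: cinner_add_left)

lemma cinner_scaleR_right: "cinner x (r *\<^sub>R y) = r *\<^sub>R cinner x (y::'a::complex_inner)"
  by (metis cinner_scaleC_right scaleC_of_real scaleR_conv_of_real)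

lemma cinner_scaleR_left: "cinner (r *\<^sub>R x) y = r *\<^sub>R cinner x (y::'a::complex_inner)"
  by (metis cinner_scaleC_left complex_cnj_complex_of_real scaleC_of_real scaleR_conv_of_real)

lemma power2_norm_eq_cinner: "(norm (x::'a::complex_inner))\<^sup>2 = Re (cinner x x)"
  by (simp add: cinner_self)

lemma cinner_self_eq_zero [simp]: "cinner x x = 0 \<longleftrightarrow> (x::'a::complex_inner) = 0"
  by (simp add: cinner_self)

lemma norm_cinner_le: "cmod (cinner x y) \<le> norm x * norm (y::'a::complex_inner)"
proof (cases "y = 0")
  case True
  then show ?thesis by simp
next
  case False
  then have ny: "norm y > 0" by simp
  \<comment> \<open>expand \<open>0 \<le> \<parallel>x - t y\<parallel>\<^sup>2\<close> with the projection coefficient \<open>t = \<langle>y,x\<rangle> / \<parallel>y\<parallel>\<^sup>2\<close>\<close>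
  define t where "t = cinner y x / complex_of_real ((norm y)\<^sup>2)"
  have expand: "cinner (x - scaleC t y) (x - scaleC t y)
      = cinner x x - t * cinner x y - cnj t * cinner y x + cnj t * (t * cinner y y)"
    by (simp add: cinner_diff_left cinner_diff_right cinner_scaleC_left cinner_scaleC_right
        algebra_simps)
  have "t * cinner y y = cinner y x"
    using ny by (simp add: t_def cinner_self)
  moreover have "t * cinner x y = complex_of_real ((cmod (cinner x y))\<^sup>2 / (norm y)\<^sup>2)"
    by (simp add: t_def cinner_commute[of y x] mult.commute complex_norm_square[symmetric])
  ultimately have "cinner (x - scaleC t y) (x - scaleC t y)
      = cinner x x - complex_of_real ((cmod (cinner x y))\<^sup>2 / (norm y)\<^sup>2)"
    using expand by simp
  then have "(norm (x - scaleC t y))\<^sup>2 = (norm x)\<^sup>2 - (cmod (cinner x y))\<^sup>2 / (norm y)\<^sup>2"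
    by (simp add: power2_norm_eq_cinner)
  then have "(cmod (cinner x y))\<^sup>2 / (norm y)\<^sup>2 \<le> (norm x)\<^sup>2"
    by (metis diff_ge_0_iff_ge zero_le_power2)
  then have "(cmod (cinner x y))\<^sup>2 \<le> (norm x * norm y)\<^sup>2"
    using ny by (simp add: field_simps)
  then show ?thesis
    by (rule power2_le_imp_le) simp
qed

lemma bounded_linear_cinner_right: "bounded_linear (cinner (x::'a::complex_inner))"
  by (rule bounded_linear_intro[where K="norm x"])
     (auto simp: cinner_add_right cinner_scaleR_right, metis norm_cinner_le mult.commute)

lemma bounded_bilinear_cinner: "bounded_bilinear (cinner :: 'a::complex_inner \<Rightarrow> 'a \<Rightarrow> complex)"
  by (rule bounded_bilinear.intro)
     (auto simp: cinner_add_right cinner_add_left cinner_scaleR_right cinner_scaleR_left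
       intro!: exI[of _ 1] norm_cinner_le)

lemma bounded_bilinear_scaleC: "bounded_bilinear (scaleC :: complex \<Rightarrow> 'a::complex_inner \<Rightarrow> 'a)"
proof (rule bounded_bilinear.intro)
  show "scaleC (r *\<^sub>R a) x = r *\<^sub>R scaleC a x" for r a and x :: 'a
    by (metis scaleC_of_real scaleC_scaleC scaleR_conv_of_real)
qed (auto simp: scaleC_add_right scaleC_add_left scaleC_scaleR_commute intro!: exI[of _ 1])

lemma cinner_ext: "(\<And>a. cinner a x = cinner a y) \<Longrightarrow> (x::'a::complex_inner) = y"
  by (metis cinner_diff_right cinner_self_eq_zero eq_iff_diff_eq_0)

lemma continuous_on_cinner [continuous_intros]:
  "continuous_on S f \<Longrightarrow> continuous_on S g \<Longrightarrow> continuous_on S (\<lambda>x. cinner (f x) (g x :: 'a::complex_inner))"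
  by (rule bounded_bilinear.continuous_on[OF bounded_bilinear_cinner])

lemma tendsto_cinner [tendsto_intros]:
  "(f \<longlongrightarrow> a) F \<Longrightarrow> (g \<longlongrightarrow> b) F \<Longrightarrow> ((\<lambda>x. cinner (f x) (g x)) \<longlongrightarrow> cinner a (b::'a::complex_inner)) F"
  by (rule bounded_bilinear.tendsto[OF bounded_bilinear_cinner])

lemma continuous_on_scaleC [continuous_intros]:
  "continuous_on S f \<Longrightarrow> continuous_on S g \<Longrightarrow> continuous_on S (\<lambda>x. scaleC (f x) (g x :: 'a::complex_inner))"
  by (rule bounded_bilinear.continuous_on[OF bounded_bilinear_scaleC])

lemma borel_measurable_cinner [measurable]:
  fixes f g :: "'b \<Rightarrow> 'h::{complex_inner,second_countable_topology}"
  assumes "f \<in> borel_measurable M" "g \<in> borel_measurable M"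
  shows "(\<lambda>x. cinner (f x) (g x)) \<in> borel_measurable M"
  by (rule borel_measurable_continuous_Pair[OF assms])
     (intro continuous_on_cinner continuous_on_fst continuous_on_snd continuous_on_id)

section \<open>Orthonormal bases\<close>

lemma cnj_mult_self: "cnj z * z = complex_of_real ((cmod z)\<^sup>2)"
  by (metis complex_norm_square mult.commute)

lemma onb_cinner:
  "is_onb B \<Longrightarrow> e \<in> B \<Longrightarrow> f \<in> B \<Longrightarrow> cinner e f = (if e = f then 1 else 0)"
  by (auto simp: is_onb_def cinner_self)

lemma onb_eq_zero: "is_onb B \<Longrightarrow> (\<And>e. e \<in> B \<Longrightarrow> cinner e x = 0) \<Longrightarrow> x = 0"
  by (simp add: is_onb_def)

lemma cinner_onb_sum:
  assumes "is_onb B" "finite F" "F \<subseteq> B" "e0 \<in> B"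
  shows "cinner e0 (\<Sum>e\<in>F. scaleC (c e) e) = (if e0 \<in> F then c e0 else 0)"
proof -
  have "cinner e0 (\<Sum>e\<in>F. scaleC (c e) e) = (\<Sum>e\<in>F. c e * (if e0 = e then 1 else 0))"
    using assms by (auto simp: cinner_sum_right cinner_scaleC_right onb_cinner intro!: sum.cong)
  also have "\<dots> = (\<Sum>e\<in>F. if e0 = e then c e else 0)"
    by (rule sum.cong) auto
  finally show ?thesis
    using assms(2) by simp
qed

lemma norm_onb_sum_sq:
  assumes "is_onb B" "finite F" "F \<subseteq> B"
  shows "(norm (\<Sum>e\<in>F. scaleC (c e) e))\<^sup>2 = (\<Sum>e\<in>F. (cmod (c e))\<^sup>2)"
proof -
  let ?s = "\<Sum>e\<in>F. scaleC (c e) e"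
  have "cinner ?s ?s = (\<Sum>e\<in>F. cnj (c e) * c e)"
    using assms cinner_onb_sum[OF assms]
    by (auto simp: cinner_sum_left cinner_scaleC_left intro!: sum.cong)
  also have "\<dots> = complex_of_real (\<Sum>e\<in>F. (cmod (c e))\<^sup>2)"
    by (simp add: cnj_mult_self)
  finally show ?thesis
    by (simp add: power2_norm_eq_cinner)
qed

lemma Bessel_inequality:
  assumes "is_onb B" "finite F" "F \<subseteq> B"
  shows "(\<Sum>e\<in>F. (cmod (cinner e x))\<^sup>2) \<le> (norm x)\<^sup>2"
proof -
  define s where "s = (\<Sum>e\<in>F. scaleC (cinner e x) e)"
  define S where "S = (\<Sum>e\<in>F. (cmod (cinner e x))\<^sup>2)"
  have "(norm s)\<^sup>2 = S"
    unfolding s_def S_def using assms by (rule norm_onb_sum_sq)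
  moreover have "cinner s x = complex_of_real S"
    by (simp add: s_def S_def cinner_sum_left cinner_scaleC_left cnj_mult_self)
  ultimately have "(norm (x - s))\<^sup>2 = (norm x)\<^sup>2 - S"
    by (simp add: power2_norm_eq_cinner cinner_diff_left cinner_diff_right cinner_commute[of x s])
  then show ?thesis
    by (metis S_def diff_ge_0_iff_ge zero_le_power2)
qed

lemma summable_on_onb_coeffs:
  "is_onb B \<Longrightarrow> (\<lambda>e. (cmod (cinner e x))\<^sup>2) summable_on B"
  by (rule nonneg_bdd_above_summable_on)
     (auto intro!: bdd_aboveI[where M="(norm x)\<^sup>2"] Bessel_inequality)

lemma summable_on_Cauchy:
  fixes f :: "'b \<Rightarrow> 'a::banach"
  assumes "\<And>\<epsilon>. \<epsilon> > 0 \<Longrightarrow> \<exists>F0. finite F0 \<and> F0 \<subseteq> A \<and>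
     (\<forall>G. finite G \<longrightarrow> G \<subseteq> A \<longrightarrow> G \<inter> F0 = {} \<longrightarrow> norm (sum f G) < \<epsilon>)"
  shows "f summable_on A"
proof -
  have "\<exists>P. eventually P (finite_subsets_at_top A) \<and>
              (\<forall>F F'. P F \<and> P F' \<longrightarrow> dist (sum f F) (sum f F') < e)" if "e > 0" for e
  proof -
    obtain F0 where F0: "finite F0" "F0 \<subseteq> A"
      "\<And>G. finite G \<Longrightarrow> G \<subseteq> A \<Longrightarrow> G \<inter> F0 = {} \<Longrightarrow> norm (sum f G) < e/2"
      using assms[of "e/2"] \<open>e > 0\<close> by auto
    define P where "P F \<longleftrightarrow> finite F \<and> F0 \<subseteq> F \<and> F \<subseteq> A" for F
    have "eventually P (finite_subsets_at_top A)"
      unfolding eventually_finite_subsets_at_top P_def using F0 by auto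
    moreover have "dist (sum f F) (sum f F') < e" if "P F" "P F'" for F F'
    proof -
      have "sum f F = sum f F0 + sum f (F - F0)" "sum f F' = sum f F0 + sum f (F' - F0)"
        using that unfolding P_def by (metis add.commute sum.subset_diff)+
      then have "dist (sum f F) (sum f F') \<le> norm (sum f (F - F0)) + norm (sum f (F' - F0))"
        by (simp add: dist_norm norm_triangle_ineq4)
      also have "\<dots> < e/2 + e/2"
        using that unfolding P_def by (intro add_strict_mono F0(3)) auto
      finally show ?thesis by simp
    qed
    ultimately show ?thesis by blast
  qed
  then have "cauchy_filter (filtermap (sum f) (finite_subsets_at_top A))"
    by (simp add: cauchy_filter_metric_filtermap)
  moreover have "complete (UNIV :: 'a set)"
    by (meson Cauchy_convergent UNIV_I complete_def convergent_def)
  ultimately obtain L where "(sum f \<longlongrightarrow> L) (finite_subsets_at_top A)"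
    using complete_uniform[where S=UNIV] by (force simp: filterlim_def)
  then show ?thesis
    using summable_on_def has_sum_def by blast
qed

lemma summable_on_onb_expansion:
  fixes x :: "'a::{complex_inner,banach}"
  assumes onb: "is_onb B"
  shows "(\<lambda>e. scaleC (cinner e x) e) summable_on B"
proof (rule summable_on_Cauchy)
  fix \<epsilon> :: real
  assume "\<epsilon> > 0"
  define c where "c e = (cmod (cinner e x))\<^sup>2" for e
  have c: "c summable_on B"
    unfolding c_def by (rule summable_on_onb_coeffs[OF onb])
  \<comment> \<open>the tails of \<open>\<Sum> c\<close> are small, and by Pythagoras they are the squared tails of the expansion\<close>
  obtain F0 where F0: "finite F0" "F0 \<subseteq> B" "dist (sum c F0) (infsum c B) < \<epsilon>\<^sup>2"
    using tendstoD[OF c[unfolded summable_iff_has_sum_infsum has_sum_def], of "\<epsilon>\<^sup>2"] \<open>\<epsilon> > 0\<close>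
    by (auto simp: eventually_finite_subsets_at_top)
  have "norm (sum (\<lambda>e. scaleC (cinner e x) e) G) < \<epsilon>"
    if G: "finite G" "G \<subseteq> B" "G \<inter> F0 = {}" for G
  proof -
    have "sum c F0 + sum c G = sum c (F0 \<union> G)"
      using F0 G by (simp add: sum.union_disjoint inf_commute)
    also have "\<dots> \<le> infsum c B"
      using F0 G c by (intro finite_sum_le_infsum) (auto simp: c_def)
    finally have "sum c G < \<epsilon>\<^sup>2"
      using F0(3) by (auto simp: dist_real_def)
    moreover have "(norm (sum (\<lambda>e. scaleC (cinner e x) e) G))\<^sup>2 = sum c G"
      unfolding c_def using onb G(1,2) by (rule norm_onb_sum_sq)
    ultimately have "(norm (sum (\<lambda>e. scaleC (cinner e x) e) G))\<^sup>2 < \<epsilon>\<^sup>2"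
      by simp
    then show ?thesis
      using \<open>\<epsilon> > 0\<close> by (simp add: power_less_imp_less_base)
  qed
  then show "\<exists>F0. finite F0 \<and> F0 \<subseteq> B \<and> (\<forall>G. finite G \<longrightarrow> G \<subseteq> B \<longrightarrow> G \<inter> F0 = {} \<longrightarrow>
      norm (sum (\<lambda>e. scaleC (cinner e x) e) G) < \<epsilon>)"
    using F0 by blast
qed

lemma has_sum_onb_expansion:
  fixes x :: "'a::{complex_inner,banach}"
  assumes onb: "is_onb B"
  shows "((\<lambda>e. scaleC (cinner e x) e) has_sum x) B"
proof -
  obtain y where y: "((\<lambda>e. scaleC (cinner e x) e) has_sum y) B"
    using summable_on_onb_expansion[OF onb] by (auto simp: summable_on_def)
  have "cinner e0 y = cinner e0 x" if "e0 \<in> B" for e0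
  proof -
    have "((\<lambda>e. cinner e0 (scaleC (cinner e x) e)) has_sum cinner e0 y) B"
      by (rule has_sum_bounded_linear[OF bounded_linear_cinner_right y])
    moreover have "((\<lambda>e. cinner e0 (scaleC (cinner e x) e)) has_sum cinner e0 x) B"
      using that onb
      by (intro has_sum_finite_neutralI[of "{e0}"]) (auto simp: cinner_scaleC_right onb_cinner)
    ultimately show ?thesis
      by (rule has_sum_unique)
  qed
  then have "x - y = 0"
    by (intro onb_eq_zero[OF onb]) (auto simp: cinner_diff_right)
  then show ?thesis
    using y by simp
qed

lemma has_sum_Parseval:
  fixes x :: "'a::{complex_inner,banach}"
  assumes "is_onb B"
  shows "((\<lambda>e. (cmod (cinner e x))\<^sup>2) has_sum (norm x)\<^sup>2) B"
proof -
  have "((\<lambda>e. cinner x (scaleC (cinner e x) e)) has_sum cinner x x) B"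
    by (rule has_sum_bounded_linear[OF bounded_linear_cinner_right has_sum_onb_expansion[OF assms]])
  moreover have "cinner x (scaleC (cinner e x) e) = complex_of_real ((cmod (cinner e x))\<^sup>2)" for e
    by (simp only: cinner_scaleC_right cinner_commute[of x e] complex_norm_square)
  ultimately have "((\<lambda>e. complex_of_real ((cmod (cinner e x))\<^sup>2)) has_sum
      complex_of_real ((norm x)\<^sup>2)) B"
    by (simp add: cinner_self)
  then show ?thesis
    by (simp only: has_sum_of_real_iff)
qed

section \<open>Hilbert--Schmidt operators\<close>

lemma bounded_clinear_imp_bounded_linear: "bounded_clinear T \<Longrightarrow> bounded_linear T"
  and bounded_clinear_scaleC_commute: "bounded_clinear T \<Longrightarrow> T (scaleC c x) = scaleC c (T x)"
  by (simp_all add: bounded_clinear_def)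

lemma has_sum_cinner_apply_onb:
  fixes v :: "'a::{complex_inner,banach}"
  assumes onb: "is_onb B" and T: "bounded_clinear (T :: 'a \<Rightarrow> 'a)"
  shows "((\<lambda>e. cinner e v * cinner f (T e)) has_sum cinner f (T v)) B"
proof -
  have "((\<lambda>e. T (scaleC (cinner e v) e)) has_sum T v) B"
    by (rule has_sum_bounded_linear[OF bounded_clinear_imp_bounded_linear[OF T] has_sum_onb_expansion[OF onb]])
  then have "((\<lambda>e. cinner f (T (scaleC (cinner e v) e))) has_sum cinner f (T v)) B"
    by (rule has_sum_bounded_linear[OF bounded_linear_cinner_right])
  then show ?thesis
    by (simp add: bounded_clinear_scaleC_commute[OF T] cinner_scaleC_right)
qed

lemma Cauchy_Schwarz_infsum:
  fixes a b :: "'b \<Rightarrow> real"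
  assumes a0: "\<And>x. x \<in> A \<Longrightarrow> a x \<ge> 0" and b0: "\<And>x. x \<in> A \<Longrightarrow> b x \<ge> 0"
    and sa: "(\<lambda>x. (a x)\<^sup>2) summable_on A" and sb: "(\<lambda>x. (b x)\<^sup>2) summable_on A"
  shows "(\<lambda>x. a x * b x) summable_on A"
    and "(\<Sum>\<^sub>\<infinity>x\<in>A. a x * b x) \<le> sqrt (\<Sum>\<^sub>\<infinity>x\<in>A. (a x)\<^sup>2) * sqrt (\<Sum>\<^sub>\<infinity>x\<in>A. (b x)\<^sup>2)"
proof -
  have "(\<lambda>x. ((a x)\<^sup>2 + (b x)\<^sup>2) / 2) summable_on A"
    using summable_on_cmult_left[OF summable_on_add[OF sa sb], of "1/2"] by simp
  moreover have "a x * b x \<le> ((a x)\<^sup>2 + (b x)\<^sup>2) / 2" for x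
    using sum_squares_bound[of "a x" "b x"] by (simp add: power2_eq_square)
  ultimately show sab: "(\<lambda>x. a x * b x) summable_on A"
    by (rule summable_on_comparison_test) (simp add: a0 b0)
  show "(\<Sum>\<^sub>\<infinity>x\<in>A. a x * b x) \<le> sqrt (\<Sum>\<^sub>\<infinity>x\<in>A. (a x)\<^sup>2) * sqrt (\<Sum>\<^sub>\<infinity>x\<in>A. (b x)\<^sup>2)"
  proof (rule infsum_le_finite_sums[OF sab])
    fix F
    assume F: "finite F" "F \<subseteq> A"
    have "(\<Sum>x\<in>F. a x * b x) = (\<Sum>x\<in>F. \<bar>a x\<bar> * \<bar>b x\<bar>)"
      using F a0 b0 by (intro sum.cong) auto
    also have "\<dots> \<le> L2_set a F * L2_set b F"
      by (rule L2_set_mult_ineq)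
    also have "\<dots> \<le> sqrt (\<Sum>\<^sub>\<infinity>x\<in>A. (a x)\<^sup>2) * sqrt (\<Sum>\<^sub>\<infinity>x\<in>A. (b x)\<^sup>2)"
      unfolding L2_set_def
      by (intro mult_mono real_sqrt_le_mono finite_sum_le_infsum sa sb F)
         (auto intro!: infsum_nonneg sum_nonneg)
    finally show "(\<Sum>x\<in>F. a x * b x) \<le> sqrt (\<Sum>\<^sub>\<infinity>x\<in>A. (a x)\<^sup>2) * sqrt (\<Sum>\<^sub>\<infinity>x\<in>A. (b x)\<^sup>2)" .
  qed
qed

lemma summable_on_cmod_cinner_apply:
  assumes "(\<lambda>g. (norm (T g))\<^sup>2) summable_on B"
  shows "(\<lambda>g. (cmod (cinner f (T g :: 'a::complex_inner)))\<^sup>2) summable_on B"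
  by (rule summable_on_comparison_test[OF summable_on_cmult_right[OF assms, of "(norm f)\<^sup>2"]])
     (simp_all add: norm_cinner_le power_mono flip: power_mult_distrib)

lemma cmod_cinner_apply_le:
  fixes T :: "'a::{complex_inner,banach} \<Rightarrow> 'a"
  assumes onb: "is_onb B" and T: "bounded_clinear T"
    and s: "(\<lambda>g. (cmod (cinner f (T g)))\<^sup>2) summable_on B"
  shows "cmod (cinner f (T v)) \<le> norm v * sqrt (\<Sum>\<^sub>\<infinity>g\<in>B. (cmod (cinner f (T g)))\<^sup>2)"
proof -
  note cs = Cauchy_Schwarz_infsum[of B "\<lambda>e. cmod (cinner e v)" "\<lambda>e. cmod (cinner f (T e))",
      OF _ _ summable_on_onb_coeffs[OF onb] s]
  have "cmod (cinner f (T v)) \<le> (\<Sum>\<^sub>\<infinity>e\<in>B. cmod (cinner e v) * cmod (cinner f (T e)))"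
    by (rule norm_infsum_le[OF has_sum_cinner_apply_onb[OF onb T] has_sum_infsum[OF cs(1)]])
       (simp_all add: norm_mult)
  also have "\<dots> \<le> sqrt (\<Sum>\<^sub>\<infinity>e\<in>B. (cmod (cinner e v))\<^sup>2) * sqrt (\<Sum>\<^sub>\<infinity>g\<in>B. (cmod (cinner f (T g)))\<^sup>2)"
    by (rule cs(2)) simp_all
  also have "(\<Sum>\<^sub>\<infinity>e\<in>B. (cmod (cinner e v))\<^sup>2) = (norm v)\<^sup>2"
    using has_sum_Parseval[OF onb] by (rule infsumI)
  finally show ?thesis
    by simp
qed

lemma norm_apply_le_sqrt_infsum:
  fixes T :: "'a::{complex_inner,banach} \<Rightarrow> 'a"
  assumes onb: "is_onb B" and T: "bounded_clinear T"
    and s: "(\<lambda>e. (norm (T e))\<^sup>2) summable_on B"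
  shows "norm (T h) \<le> sqrt (\<Sum>\<^sub>\<infinity>e\<in>B. (norm (T e))\<^sup>2) * norm h"
proof (cases "T h = 0")
  case True
  then show ?thesis
    by (auto intro!: mult_nonneg_nonneg infsum_nonneg)
next
  case False
  define C where "C = (\<Sum>\<^sub>\<infinity>e\<in>B. (norm (T e))\<^sup>2)"
  have "(\<Sum>\<^sub>\<infinity>g\<in>B. (cmod (cinner (T h) (T g)))\<^sup>2) \<le> (\<Sum>\<^sub>\<infinity>g\<in>B. (norm (T h))\<^sup>2 * (norm (T g))\<^sup>2)"
    by (rule infsum_mono[OF summable_on_cmod_cinner_apply[OF s] summable_on_cmult_right[OF s]])
       (simp add: norm_cinner_le power_mono flip: power_mult_distrib)
  also have "\<dots> = (norm (T h))\<^sup>2 * C"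
    unfolding C_def by (rule infsum_cmult_right[OF s])
  finally have row: "(\<Sum>\<^sub>\<infinity>g\<in>B. (cmod (cinner (T h) (T g)))\<^sup>2) \<le> (norm (T h))\<^sup>2 * C" .
  have "(norm (T h))\<^sup>2 = cmod (cinner (T h) (T h))"
    unfolding cinner_self norm_of_real by simp
  also have "\<dots> \<le> norm h * sqrt (\<Sum>\<^sub>\<infinity>g\<in>B. (cmod (cinner (T h) (T g)))\<^sup>2)"
    by (intro cmod_cinner_apply_le[OF onb T] summable_on_cmod_cinner_apply s)
  also have "\<dots> \<le> norm h * (norm (T h) * sqrt C)"
    using row by (intro mult_left_mono) (auto simp: real_sqrt_mult intro: real_sqrt_le_mono order_trans)
  finally have "norm (T h) * norm (T h) \<le> norm (T h) * (sqrt C * norm h)"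
    by (simp add: power2_eq_square algebra_simps)
  then show ?thesis
    using False by (simp add: C_def mult_le_cancel_left)
qed

lemma has_sum_finite_sum:
  fixes f :: "'i \<Rightarrow> 'b \<Rightarrow> 'c::topological_comm_monoid_add"
  assumes "finite I" "\<And>i. i \<in> I \<Longrightarrow> (f i has_sum s i) A"
  shows "((\<lambda>x. \<Sum>i\<in>I. f i x) has_sum (\<Sum>i\<in>I. s i)) A"
  using assms by (induction I rule: finite_induct) (auto intro!: has_sum_add)

lemma sum_cmod_cinner_apply_le_infsum:
  fixes T :: "'a::{complex_inner,banach} \<Rightarrow> 'a"
  assumes B: "is_onb B" and B': "is_onb B'" and T: "bounded_clinear T"
    and s: "(\<lambda>g. (norm (T g))\<^sup>2) summable_on B"
    and F: "finite F" "F \<subseteq> B'"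
  shows "(\<Sum>e\<in>F. (cmod (cinner f (T e)))\<^sup>2) \<le> (\<Sum>\<^sub>\<infinity>g\<in>B. (cmod (cinner f (T g)))\<^sup>2)"
proof -
  define E where "E = (\<Sum>e\<in>F. (cmod (cinner f (T e)))\<^sup>2)"
  define D where "D = (\<Sum>\<^sub>\<infinity>g\<in>B. (cmod (cinner f (T g)))\<^sup>2)"
  \<comment> \<open>test against \<open>v = \<Sum>\<^sub>e \<langle>T e, f\<rangle> e\<close>, for which \<open>\<langle>f, T v\<rangle> = \<parallel>v\<parallel>\<^sup>2 = E\<close>\<close>
  define v where "v = (\<Sum>e\<in>F. scaleC (cinner (T e) f) e)"
  have "T v = (\<Sum>e\<in>F. scaleC (cinner (T e) f) (T e))"
    unfolding v_def
    by (simp add: linear_sum[OF bounded_linear.linear[OF bounded_clinear_imp_bounded_linear[OF T]]]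
        bounded_clinear_scaleC_commute[OF T])
  then have "cinner f (T v) = (\<Sum>e\<in>F. cnj (cinner f (T e)) * cinner f (T e))"
    by (simp add: cinner_sum_right cinner_scaleC_right cinner_commute[of "T _" f])
  then have "cinner f (T v) = complex_of_real E"
    by (simp add: E_def cnj_mult_self del: of_real_power)
  moreover have "E \<ge> 0" "D \<ge> 0"
    unfolding E_def D_def by (auto intro!: sum_nonneg infsum_nonneg)
  ultimately have "cmod (cinner f (T v)) = E"
    by simp
  moreover have "cmod (cinner f (T v)) \<le> norm v * sqrt D"
    unfolding D_def by (intro cmod_cinner_apply_le[OF B T] summable_on_cmod_cinner_apply s)
  ultimately have "E\<^sup>2 \<le> (norm v * sqrt D)\<^sup>2"
    using \<open>E \<ge> 0\<close> by (intro power_mono) simp_all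
  also have "\<dots> = (norm v)\<^sup>2 * D"
    using \<open>D \<ge> 0\<close> by (simp add: power_mult_distrib)
  also have "(norm v)\<^sup>2 = E"
    unfolding v_def E_def using norm_onb_sum_sq[OF B' F]
    by (simp add: cinner_commute[of "T _" f])
  finally have "E \<le> D"
    using \<open>E \<ge> 0\<close> \<open>D \<ge> 0\<close> by (cases "E = 0") (auto simp: power2_eq_square mult_le_cancel_right)
  then show ?thesis
    by (simp add: E_def D_def)
qed

lemma infsum_infsum_cmod_cinner_apply_le:
  fixes T :: "'a::{complex_inner,banach} \<Rightarrow> 'a"
  assumes B: "is_onb B" and s: "(\<lambda>g. (norm (T g))\<^sup>2) summable_on B"
  shows "(\<lambda>f. \<Sum>\<^sub>\<infinity>g\<in>B. (cmod (cinner f (T g)))\<^sup>2) summable_on B"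
    and "(\<Sum>\<^sub>\<infinity>f\<in>B. \<Sum>\<^sub>\<infinity>g\<in>B. (cmod (cinner f (T g)))\<^sup>2) \<le> (\<Sum>\<^sub>\<infinity>g\<in>B. (norm (T g))\<^sup>2)"
proof -
  define D where "D f = (\<Sum>\<^sub>\<infinity>g\<in>B. (cmod (cinner f (T g)))\<^sup>2)" for f
  define C where "C = (\<Sum>\<^sub>\<infinity>g\<in>B. (norm (T g))\<^sup>2)"
  have partial: "sum D F \<le> C" if F: "finite F" "F \<subseteq> B" for F
  proof -
    have "((\<lambda>g. \<Sum>f\<in>F. (cmod (cinner f (T g)))\<^sup>2) has_sum sum D F) B"
      unfolding D_def using F(1)
      by (intro has_sum_finite_sum has_sum_infsum summable_on_cmod_cinner_apply[OF s])
    moreover have "(\<Sum>f\<in>F. (cmod (cinner f (T g)))\<^sup>2) \<le> (norm (T g))\<^sup>2" for g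
      using finite_sum_le_has_sum[OF has_sum_Parseval[OF B] F] by simp
    ultimately show ?thesis
      unfolding C_def by (rule has_sum_mono[OF _ has_sum_infsum[OF s]])
  qed
  have "D f \<ge> 0" for f
    unfolding D_def by (intro infsum_nonneg) simp
  moreover have "bdd_above (sum D ` {F. F \<subseteq> B \<and> finite F})"
    using partial by (intro bdd_aboveI[where M=C]) blast
  ultimately have "D summable_on B"
    by (rule nonneg_bdd_above_summable_on)
  moreover from this partial have "infsum D B \<le> C"
    by (rule infsum_le_finite_sums)
  ultimately show "(\<lambda>f. \<Sum>\<^sub>\<infinity>g\<in>B. (cmod (cinner f (T g)))\<^sup>2) summable_on B"
    and "(\<Sum>\<^sub>\<infinity>f\<in>B. \<Sum>\<^sub>\<infinity>g\<in>B. (cmod (cinner f (T g)))\<^sup>2) \<le> (\<Sum>\<^sub>\<infinity>g\<in>B. (norm (T g))\<^sup>2)"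
    unfolding D_def C_def by simp_all
qed

lemma summable_on_norm_apply_onb_change:
  fixes T :: "'a::{complex_inner,banach} \<Rightarrow> 'a"
  assumes B: "is_onb B" and B': "is_onb B'" and T: "bounded_clinear T"
    and s: "(\<lambda>e. (norm (T e))\<^sup>2) summable_on B"
  shows "(\<lambda>e. (norm (T e))\<^sup>2) summable_on B'"
proof (rule nonneg_bdd_above_summable_on)
  let ?D = "\<lambda>f. \<Sum>\<^sub>\<infinity>g\<in>B. (cmod (cinner f (T g)))\<^sup>2"
  show "bdd_above (sum (\<lambda>e. (norm (T e))\<^sup>2) ` {F. F \<subseteq> B' \<and> finite F})"
  proof (rule bdd_aboveI, clarsimp)
    fix F
    assume F: "F \<subseteq> B'" "finite F"
    have "((\<lambda>f. \<Sum>e\<in>F. (cmod (cinner f (T e)))\<^sup>2) has_sum (\<Sum>e\<in>F. (norm (T e))\<^sup>2)) B"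
      using F(2) by (intro has_sum_finite_sum has_sum_Parseval[OF B])
    moreover have "(?D has_sum infsum ?D B) B"
      using infsum_infsum_cmod_cinner_apply_le(1)[OF B s] by (rule has_sum_infsum)
    ultimately have "(\<Sum>e\<in>F. (norm (T e))\<^sup>2) \<le> infsum ?D B"
      by (rule has_sum_mono) (rule sum_cmod_cinner_apply_le_infsum[OF B B' T s F(2,1)])
    also have "\<dots> \<le> (\<Sum>\<^sub>\<infinity>g\<in>B. (norm (T g))\<^sup>2)"
      by (rule infsum_infsum_cmod_cinner_apply_le(2)[OF B s])
    finally show "(\<Sum>e\<in>F. (norm (T e))\<^sup>2) \<le> (\<Sum>\<^sub>\<infinity>g\<in>B. (norm (T g))\<^sup>2)" .
  qed
qed simp

lemma hilbert_schmidt_iff: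
  fixes T :: "'a::{complex_inner,banach} \<Rightarrow> 'a"
  assumes "is_onb B"
  shows "hilbert_schmidt T \<longleftrightarrow> bounded_clinear T \<and> (\<lambda>e. (norm (T e))\<^sup>2) summable_on B"
  using assms summable_on_norm_apply_onb_change unfolding hilbert_schmidt_def by blast

lemma bounded_linear_hilbert_schmidt: "hilbert_schmidt T \<Longrightarrow> bounded_linear T"
  by (simp add: hilbert_schmidt_def bounded_clinear_def)

lemma hs_norm_nonneg: "hs_norm T \<ge> 0"
  by (simp add: hs_norm_def infsum_nonneg)

lemma norm_apply_le_hs_norm:
  fixes T :: "'a::{complex_inner,banach} \<Rightarrow> 'a"
  assumes "hilbert_schmidt T"
  shows "norm (T h) \<le> hs_norm T * norm h"
proof -
  have onb: "is_onb (SOME B. is_onb B :: 'a set)"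
    using assms unfolding hilbert_schmidt_def by (metis someI_ex)
  with assms have "bounded_clinear T" "(\<lambda>e. (norm (T e))\<^sup>2) summable_on (SOME B. is_onb B)"
    by (simp_all add: hilbert_schmidt_iff)
  then show ?thesis
    unfolding hs_norm_def by (rule norm_apply_le_sqrt_infsum[OF onb])
qed

lemma bounded_clinear_zero: "bounded_clinear (\<lambda>h. 0)"
  by (simp add: bounded_clinear_def)

lemma bounded_clinear_add:
  "bounded_clinear A \<Longrightarrow> bounded_clinear B \<Longrightarrow> bounded_clinear (\<lambda>h. A h + B h)"
  by (auto simp: bounded_clinear_def scaleC_add_right intro: bounded_linear_add)

lemma bounded_clinear_scaleC:
  "bounded_clinear A \<Longrightarrow> bounded_clinear (\<lambda>h. scaleC c (A h))"
  by (auto simp: bounded_clinear_def scaleC_scaleC mult.commute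
      intro: bounded_linear_compose[OF bounded_bilinear.bounded_linear_right[OF bounded_bilinear_scaleC]])

lemma bounded_clinear_rank1: "bounded_clinear (rank1 a b)"
  by (auto simp: bounded_clinear_def rank1_def scaleC_scaleC cinner_scaleC_right
      intro: bounded_linear_compose[OF bounded_bilinear.bounded_linear_left[OF bounded_bilinear_scaleC]
        bounded_linear_cinner_right])

lemma power2_norm_add_le:
  "(norm (x + y))\<^sup>2 \<le> 2 * (norm x)\<^sup>2 + 2 * (norm (y :: 'a::real_normed_vector))\<^sup>2"
proof -
  have "(norm (x + y))\<^sup>2 \<le> (norm x + norm y)\<^sup>2"
    by (simp add: norm_triangle_ineq power_mono)
  also have "\<dots> \<le> 2 * (norm x)\<^sup>2 + 2 * (norm y)\<^sup>2"
    using sum_squares_bound[of "norm x" "norm y"] by (simp add: power2_eq_square algebra_simps)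
  finally show ?thesis .
qed

lemma hilbert_schmidt_zero: "is_onb (B :: 'a::complex_inner set) \<Longrightarrow> hilbert_schmidt (\<lambda>h. 0 :: 'a)"
  unfolding hilbert_schmidt_def by (auto simp: bounded_clinear_zero)

lemma hilbert_schmidt_add:
  fixes A B :: "'a::{complex_inner,banach} \<Rightarrow> 'a"
  assumes "hilbert_schmidt A" "hilbert_schmidt B"
  shows "hilbert_schmidt (\<lambda>h. A h + B h)"
proof -
  obtain E :: "'a set" where E: "is_onb E"
    using assms(1) unfolding hilbert_schmidt_def by blast
  then have "(\<lambda>e. 2 * (norm (A e))\<^sup>2 + 2 * (norm (B e))\<^sup>2) summable_on E"
    using assms by (intro summable_on_add summable_on_cmult_right) (simp_all add: hilbert_schmidt_iff)
  then have "(\<lambda>e. (norm (A e + B e))\<^sup>2) summable_on E"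
    by (rule summable_on_comparison_test) (simp_all add: power2_norm_add_le)
  then show ?thesis
    using assms E by (simp add: hilbert_schmidt_iff bounded_clinear_add)
qed

lemma hilbert_schmidt_scaleC:
  fixes A :: "'a::{complex_inner,banach} \<Rightarrow> 'a"
  assumes "hilbert_schmidt A"
  shows "hilbert_schmidt (\<lambda>h. scaleC c (A h))"
proof -
  obtain E :: "'a set" where E: "is_onb E"
    using assms unfolding hilbert_schmidt_def by blast
  then have "(\<lambda>e. (cmod c)\<^sup>2 * (norm (A e))\<^sup>2) summable_on E"
    using assms by (intro summable_on_cmult_right) (simp add: hilbert_schmidt_iff)
  then show ?thesis
    using assms E by (simp add: hilbert_schmidt_iff bounded_clinear_scaleC power_mult_distrib)
qed

lemma hilbert_schmidt_diff:
  fixes A B :: "'a::{complex_inner,banach} \<Rightarrow> 'a"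
  assumes "hilbert_schmidt A" "hilbert_schmidt B"
  shows "hilbert_schmidt (\<lambda>h. A h - B h)"
  using hilbert_schmidt_add[OF assms(1) hilbert_schmidt_scaleC[OF assms(2), of "- 1"]] by simp

lemma hilbert_schmidt_sum:
  fixes A :: "'i \<Rightarrow> 'a::{complex_inner,banach} \<Rightarrow> 'a"
  shows "is_onb (B :: 'a set) \<Longrightarrow> (\<And>i. i \<in> I \<Longrightarrow> hilbert_schmidt (A i)) \<Longrightarrow>
    hilbert_schmidt (\<lambda>h. \<Sum>i\<in>I. A i h)"
  by (induction I rule: infinite_finite_induct) (auto intro: hilbert_schmidt_zero hilbert_schmidt_add)

lemma hilbert_schmidt_rank1:
  fixes a b :: "'a::{complex_inner,banach}"
  assumes "is_onb (B :: 'a set)"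
  shows "hilbert_schmidt (rank1 a b)"
proof -
  have "(\<lambda>e. (cmod (cinner e b))\<^sup>2 * (norm a)\<^sup>2) summable_on B"
    by (rule summable_on_cmult_left[OF summable_on_onb_coeffs[OF assms]])
  moreover have "(norm (rank1 a b e))\<^sup>2 = (cmod (cinner e b))\<^sup>2 * (norm a)\<^sup>2" for e
    by (simp add: rank1_def power_mult_distrib cinner_commute[of b])
  ultimately show ?thesis
    using assms by (simp add: hilbert_schmidt_iff bounded_clinear_rank1)
qed

section \<open>Square-integrable functions on a compact set\<close>

lemma sets_lebesgue_compact: "compact X \<Longrightarrow> X \<in> sets lebesgue"
  using lmeasurable_compact fmeasurableD by blast

lemma finite_measure_lebesgue_on_compact: "compact X \<Longrightarrow> finite_measure (lebesgue_on X)"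
  by (simp add: finite_measure_lebesgue_on lmeasurable_compact)

lemma borel_measurable_continuous_on_compact:
  "compact X \<Longrightarrow> continuous_on X f \<Longrightarrow> f \<in> borel_measurable (lebesgue_on X)"
  by (rule continuous_imp_measurable_on_sets_lebesgue) (auto simp: sets_lebesgue_compact)

lemma integrable_bounded_on_compact:
  fixes f :: "'a::euclidean_space \<Rightarrow> 'b::{banach,second_countable_topology}"
  assumes "compact X" "f \<in> borel_measurable (lebesgue_on X)" "\<And>x. x \<in> X \<Longrightarrow> norm (f x) \<le> B"
  shows "integrable (lebesgue_on X) f"
  by (rule finite_measure.integrable_const_bound[OF finite_measure_lebesgue_on_compact[OF assms(1)],
        where B=B])
     (use assms in auto)

lemma integrable_continuous_on_compact:
  fixes f :: "'a::euclidean_space \<Rightarrow> 'b::{banach,second_countable_topology}"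
  assumes "compact X" "continuous_on X f"
  shows "integrable (lebesgue_on X) f"
proof -
  obtain B where "\<And>x. x \<in> X \<Longrightarrow> norm (f x) \<le> B"
    using compact_imp_bounded[OF compact_continuous_image[OF assms(2,1)]] by (auto simp: bounded_iff)
  then show ?thesis
    using integrable_bounded_on_compact[OF assms(1) borel_measurable_continuous_on_compact[OF assms]]
    by blast
qed

lemma L2_continuous_on:
  fixes f :: "'a::euclidean_space \<Rightarrow> 'h::{complex_inner,banach,second_countable_topology}"
  assumes "compact X" "continuous_on X f"
  shows "f \<in> L2 X"
proof -
  have "continuous_on X (\<lambda>x. (norm (f x))\<^sup>2)"
    by (intro continuous_intros assms(2))
  then show ?thesis
    unfolding L2_def
    using borel_measurable_continuous_on_compact[OF assms] integrable_continuous_on_compact[OF assms(1)]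
    by blast
qed

lemma integrable_norm_L2:
  assumes "compact X" "f \<in> L2 X"
  shows "integrable (lebesgue_on X) (\<lambda>x. norm (f x))"
proof (rule Bochner_Integration.integrable_bound)
  interpret finite_measure "lebesgue_on X"
    using finite_measure_lebesgue_on_compact[OF assms(1)] .
  show "integrable (lebesgue_on X) (\<lambda>x. 1 + (norm (f x))\<^sup>2)"
    using assms(2) by (auto simp: L2_def)
  show "(\<lambda>x. norm (f x)) \<in> borel_measurable (lebesgue_on X)"
    using assms(2) by (auto simp: L2_def)
  have "t \<le> 1 + t\<^sup>2" for t :: real
    by (smt (verit) zero_le_power2 sum_squares_bound[of t 1] power_one)
  then show "AE x in lebesgue_on X. norm (norm (f x)) \<le> norm (1 + (norm (f x))\<^sup>2)"
    by (intro AE_I2) simp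
qed

lemma integrable_cinner_L2:
  assumes "f \<in> L2 X" "g \<in> L2 X"
  shows "integrable (lebesgue_on X) (\<lambda>x. cinner (f x) (g x))"
proof (rule Bochner_Integration.integrable_bound)
  show "integrable (lebesgue_on X) (\<lambda>x. (norm (f x))\<^sup>2 + (norm (g x))\<^sup>2)"
    using assms by (auto simp: L2_def)
  show "(\<lambda>x. cinner (f x) (g x)) \<in> borel_measurable (lebesgue_on X)"
    using assms by (auto simp: L2_def)
  have "norm (cinner (f x) (g x)) \<le> (norm (f x))\<^sup>2 + (norm (g x))\<^sup>2" for x
    using norm_cinner_le[of "f x" "g x"] sum_squares_bound[of "norm (f x)" "norm (g x)"]
      mult_nonneg_nonneg[OF norm_ge_zero norm_ge_zero, of "f x" "g x"]
    by linarith
  then show "AE x in lebesgue_on X. norm (cinner (f x) (g x)) \<le> norm ((norm (f x))\<^sup>2 + (norm (g x))\<^sup>2)"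
    by (intro AE_I2) simp
qed

lemma L2_inner_commute: "L2_inner X g f = cnj (L2_inner X f g)"
  unfolding L2_inner_def Bochner_Integration.integral_cnj[symmetric]
  by (simp add: cinner_commute[of "g _"])

lemma L2_inner_diff_right:
  "f \<in> L2 X \<Longrightarrow> g1 \<in> L2 X \<Longrightarrow> g2 \<in> L2 X \<Longrightarrow>
    L2_inner X f (\<lambda>x. g1 x - g2 x) = L2_inner X f g1 - L2_inner X f g2"
  unfolding L2_inner_def cinner_diff_right
  by (rule Bochner_Integration.integral_diff) (simp_all add: integrable_cinner_L2)

lemma L2_inner_diff_left:
  "f \<in> L2 X \<Longrightarrow> g1 \<in> L2 X \<Longrightarrow> g2 \<in> L2 X \<Longrightarrow>
    L2_inner X (\<lambda>x. g1 x - g2 x) f = L2_inner X g1 f - L2_inner X g2 f"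
  unfolding L2_inner_def cinner_diff_left
  by (rule Bochner_Integration.integral_diff) (simp_all add: integrable_cinner_L2)

lemma L2_inner_sum_right:
  "(\<And>k. k \<in> I \<Longrightarrow> g k \<in> L2 X) \<Longrightarrow> f \<in> L2 X \<Longrightarrow>
    L2_inner X f (\<lambda>x. \<Sum>k\<in>I. scaleC (c k) (g k x)) = (\<Sum>k\<in>I. c k * L2_inner X f (g k))"
  unfolding L2_inner_def cinner_sum_right cinner_scaleC_right
  by (subst Bochner_Integration.integral_sum) (auto intro!: integrable_cinner_L2)

lemma L2_inner_sum_left:
  "(\<And>k. k \<in> I \<Longrightarrow> g k \<in> L2 X) \<Longrightarrow> f \<in> L2 X \<Longrightarrow>
    L2_inner X (\<lambda>x. \<Sum>k\<in>I. scaleC (c k) (g k x)) f = (\<Sum>k\<in>I. cnj (c k) * L2_inner X (g k) f)"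
  unfolding L2_inner_def cinner_sum_left cinner_scaleC_left
  by (subst Bochner_Integration.integral_sum) (auto intro!: integrable_cinner_L2)

lemma cmod_L2_inner_diff_le:
  assumes X: "compact X" and f: "f \<in> L2 X" and g: "g1 \<in> L2 X" "g2 \<in> L2 X"
    and close: "\<And>x. x \<in> X \<Longrightarrow> norm (g1 x - g2 x) \<le> \<eta>"
  shows "cmod (L2_inner X f g1 - L2_inner X f g2) \<le> \<eta> * (\<integral>x. norm (f x) \<partial>lebesgue_on X)"
proof -
  have "L2_inner X f g1 - L2_inner X f g2 = (\<integral>x. cinner (f x) (g1 x - g2 x) \<partial>lebesgue_on X)"
    using L2_inner_diff_right[OF f g] by (simp add: L2_inner_def)
  also have "cmod \<dots> \<le> (\<integral>x. norm (cinner (f x) (g1 x - g2 x)) \<partial>lebesgue_on X)"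
    by (rule integral_norm_bound)
  also have "\<dots> \<le> (\<integral>x. \<eta> * norm (f x) \<partial>lebesgue_on X)"
  proof (rule integral_mono)
    show "integrable (lebesgue_on X) (\<lambda>x. norm (cinner (f x) (g1 x - g2 x)))"
      using integrable_cinner_L2[OF f g(1)] integrable_cinner_L2[OF f g(2)]
      by (simp add: cinner_diff_right)
    show "integrable (lebesgue_on X) (\<lambda>x. \<eta> * norm (f x))"
      using integrable_norm_L2[OF X f] by simp
    fix x
    assume "x \<in> space (lebesgue_on X)"
    then have "norm (g1 x - g2 x) \<le> \<eta>"
      by (simp add: close)
    then show "norm (cinner (f x) (g1 x - g2 x)) \<le> \<eta> * norm (f x)"
      by (metis norm_cinner_le mult.commute mult_left_mono norm_ge_zero order_trans)
  qed
  finally show ?thesis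
    by simp
qed

lemma tendsto_L2_inner_uniform_limit_right:
  assumes X: "compact X" and g: "g \<in> L2 X" and F: "\<And>n. F n \<in> L2 X" and G: "G \<in> L2 X"
    and lim: "uniform_limit X F G net"
  shows "((\<lambda>n. L2_inner X g (F n)) \<longlongrightarrow> L2_inner X g G) net"
proof (rule tendstoI)
  fix r :: real
  assume "r > 0"
  define I where "I = (\<integral>x. norm (g x) \<partial>lebesgue_on X)"
  have "I \<ge> 0"
    unfolding I_def by simp
  then have "r / (I + 1) > 0" "r / (I + 1) * I < r"
    using \<open>r > 0\<close> by (simp_all add: field_simps)
  from uniform_limitD[OF lim this(1)] show "\<forall>\<^sub>F n in net. dist (L2_inner X g (F n)) (L2_inner X g G) < r"
  proof eventually_elim
    case (elim n)
    have "cmod (L2_inner X g (F n) - L2_inner X g G) \<le> r / (I + 1) * I"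
      using elim unfolding I_def
      by (intro cmod_L2_inner_diff_le[OF X g F G]) (simp add: dist_norm less_imp_le)
    then show ?case
      using \<open>r / (I + 1) * I < r\<close> by (simp add: dist_norm)
  qed
qed

lemma tendsto_L2_inner_uniform_limit_left:
  assumes "compact X" "g \<in> L2 X" "\<And>n. F n \<in> L2 X" "G \<in> L2 X" "uniform_limit X F G net"
  shows "((\<lambda>n. L2_inner X (F n) g) \<longlongrightarrow> L2_inner X G g) net"
  using tendsto_cnj[OF tendsto_L2_inner_uniform_limit_right[OF assms]]
  by (simp add: L2_inner_commute[of X g])

lemma continuous_on_integral_kernel:
  fixes G :: "'a::euclidean_space \<times> 'a \<Rightarrow> 'b::{banach,second_countable_topology}"
  assumes X: "compact X" and G: "continuous_on (X \<times> X) G"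
    and s: "s \<in> borel_measurable (lebesgue_on X)" "\<And>y. y \<in> X \<Longrightarrow> \<bar>s y\<bar> \<le> S"
  shows "continuous_on X (\<lambda>x. \<integral>y. s y *\<^sub>R G (x, y) \<partial>lebesgue_on X)"
proof (rule continuous_on_sequentiallyI)
  fix u x
  assume u: "\<forall>n. u n \<in> X" and x: "x \<in> X" and lim: "u \<longlonglongrightarrow> x"
  obtain K where K: "\<And>p. p \<in> X \<times> X \<Longrightarrow> norm (G p) \<le> K"
    using compact_imp_bounded[OF compact_continuous_image[OF G compact_Times[OF X X]]]
    by (auto simp: bounded_iff)
  have meas: "(\<lambda>y. s y *\<^sub>R G (x', y)) \<in> borel_measurable (lebesgue_on X)" if "x' \<in> X" for x'
  proof -
    have "continuous_on X (\<lambda>y. G (x', y))"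
      by (rule continuous_on_compose2[OF G]) (auto intro!: continuous_on_Pair simp: that)
    then show ?thesis
      using s(1) borel_measurable_continuous_on_compact[OF X] by measurable
  qed
  show "(\<lambda>n. \<integral>y. s y *\<^sub>R G (u n, y) \<partial>lebesgue_on X) \<longlonglongrightarrow> (\<integral>y. s y *\<^sub>R G (x, y) \<partial>lebesgue_on X)"
  proof (rule integral_dominated_convergence[where w="\<lambda>_. S * K"])
    show "integrable (lebesgue_on X) (\<lambda>_. S * K)"
      by (rule finite_measure.integrable_const[OF finite_measure_lebesgue_on_compact[OF X]])
    have "(\<lambda>n. G (u n, y)) \<longlonglongrightarrow> G (x, y)" if "y \<in> X" for y
      by (rule continuous_on_tendsto_compose[OF G]) (use u x lim that in \<open>auto intro: tendsto_Pair\<close>)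
    then show "AE y in lebesgue_on X. (\<lambda>n. s y *\<^sub>R G (u n, y)) \<longlonglongrightarrow> s y *\<^sub>R G (x, y)"
      by (intro AE_I2) (auto intro: tendsto_scaleR)
    have "\<bar>s y\<bar> * norm (G (u n, y)) \<le> S * K" if "y \<in> X" for y n
      using s(2)[OF that] K[of "(u n, y)"] u that
      by (intro mult_mono) (auto intro: order_trans[OF abs_ge_zero])
    then show "AE y in lebesgue_on X. norm (s y *\<^sub>R G (u n, y)) \<le> S * K" for n
      by (intro AE_I2) simp
  qed (use meas u x in auto)
qed

section \<open>Averages over small balls\<close>

definition ball_measure :: "'a::euclidean_space set \<Rightarrow> 'a \<Rightarrow> real \<Rightarrow> real" where
  "ball_measure X z \<epsilon> = measure lebesgue (ball z \<epsilon> \<inter> X)"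

definition ball_average ::
    "'a::euclidean_space set \<Rightarrow> 'a \<Rightarrow> real \<Rightarrow> ('a \<Rightarrow> 'b::{banach,second_countable_topology}) \<Rightarrow> 'b" where
  "ball_average X z \<epsilon> g =
     (1 / ball_measure X z \<epsilon>) *\<^sub>R (\<integral>y. indicator (ball z \<epsilon>) y *\<^sub>R g y \<partial>lebesgue_on X)"

definition ball_delta :: "'a::euclidean_space set \<Rightarrow> 'a \<Rightarrow> real \<Rightarrow> 'b::real_normed_vector \<Rightarrow> 'a \<Rightarrow> 'b" where
  "ball_delta X z \<epsilon> h = (\<lambda>y. (indicator (ball z \<epsilon>) y / ball_measure X z \<epsilon>) *\<^sub>R h)"

lemma borel_measurable_indicator_ball [measurable]:
  "(indicator (ball z \<epsilon>) :: 'a::euclidean_space \<Rightarrow> real) \<in> borel_measurable (lebesgue_on X)"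
  by (intro measurable_restrict_space1 borel_measurable_indicator fmeasurableD lmeasurable_ball)

lemma integrable_indicator_ball:
  "compact X \<Longrightarrow> integrable (lebesgue_on X) (indicator (ball z \<epsilon>) :: _ \<Rightarrow> real)"
  by (rule integrable_bounded_on_compact[where B=1]) (simp_all add: indicator_def)

lemma integral_indicator_ball:
  "compact X \<Longrightarrow> (\<integral>y. indicator (ball z \<epsilon>) y \<partial>lebesgue_on X) = ball_measure X z \<epsilon>"
  by (simp add: ball_measure_def measure_restrict_space sets_lebesgue_compact Int_commute)

lemma ball_delta_L2:
  fixes h :: "'h::{complex_inner,banach,second_countable_topology}"
  assumes "compact X"
  shows "ball_delta X z \<epsilon> h \<in> L2 X"
proof -
  have meas: "ball_delta X z \<epsilon> h \<in> borel_measurable (lebesgue_on X)"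
    unfolding ball_delta_def by measurable
  then have "(\<lambda>x. (norm (ball_delta X z \<epsilon> h x))\<^sup>2) \<in> borel_measurable (lebesgue_on X)"
    by measurable
  then have "integrable (lebesgue_on X) (\<lambda>x. (norm (ball_delta X z \<epsilon> h x))\<^sup>2)"
    by (rule integrable_bounded_on_compact[OF assms, where B="(norm h / \<bar>ball_measure X z \<epsilon>\<bar>)\<^sup>2"])
       (auto simp: ball_delta_def indicator_def power_divide)
  with meas show ?thesis
    by (simp add: L2_def)
qed

lemma L2_inner_ball_delta:
  "L2_inner X g (ball_delta X z \<epsilon> h) = ball_average X z \<epsilon> (\<lambda>y. cinner (g y) h)"
  unfolding L2_inner_def ball_delta_def ball_average_def cinner_scaleR_right
  by (simp flip: integral_scaleR_right)

locale compact_domain =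
  fixes X :: "'a::euclidean_space set"
  assumes compact: "compact X"
    and support: "\<And>U. open U \<Longrightarrow> U \<inter> X \<noteq> {} \<Longrightarrow> emeasure lebesgue (U \<inter> X) > 0"
begin

lemma AE_zero_imp_zero:
  fixes u :: "'a \<Rightarrow> 'b::real_normed_vector"
  assumes u: "continuous_on X u" and ae: "AE x in lebesgue_on X. u x = 0" and x: "x \<in> X"
  shows "u x = 0"
proof (rule ccontr)
  assume "u x \<noteq> 0"
  have "openin (top_of_set X) (X \<inter> u -` (- {0}))"
    by (rule continuous_openin_preimage_gen[OF u]) auto
  then obtain U where U: "open U" "X \<inter> u -` (- {0}) = X \<inter> U"
    unfolding openin_open by blast
  have "X \<inter> U \<in> sets (lebesgue_on X)"
    using U(1) compact by (simp add: sets_restrict_space_iff sets_lebesgue_compact borel_open sets.Int)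
  moreover have "{x \<in> space (lebesgue_on X). u x \<noteq> 0} = X \<inter> U"
    using U(2) by auto
  ultimately have "emeasure lebesgue (X \<inter> U) = 0"
    using AE_iff_measurable[of "X \<inter> U" "lebesgue_on X"] ae
    by (simp add: emeasure_restrict_space sets_lebesgue_compact compact)
  moreover have "U \<inter> X \<noteq> {}"
    using U(2) x \<open>u x \<noteq> 0\<close> by auto
  ultimately show False
    using support[OF U(1)] by (simp add: Int_commute)
qed

lemma L2_inner_self_eq_zero_imp_zero:
  fixes u :: "'a \<Rightarrow> 'h::{complex_inner,banach,second_countable_topology}"
  assumes u: "continuous_on X u" and "L2_inner X u u = 0" and x: "x \<in> X"
  shows "u x = 0"
proof -
  have "L2_inner X u u = complex_of_real (\<integral>x. (norm (u x))\<^sup>2 \<partial>lebesgue_on X)"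
    unfolding L2_inner_def cinner_self by (rule integral_complex_of_real)
  with assms(2) have "(\<integral>x. (norm (u x))\<^sup>2 \<partial>lebesgue_on X) = 0"
    by simp
  then have "AE x in lebesgue_on X. (norm (u x))\<^sup>2 = 0"
    using L2_continuous_on[OF compact u] by (subst (asm) integral_nonneg_eq_0_iff_AE) (auto simp: L2_def)
  then have "AE x in lebesgue_on X. u x = 0"
    by simp
  then show ?thesis
    by (rule AE_zero_imp_zero[OF u _ x])
qed

lemma ball_measure_pos:
  assumes "z \<in> X" "\<epsilon> > 0"
  shows "ball_measure X z \<epsilon> > 0"
proof -
  have "emeasure lebesgue (ball z \<epsilon> \<inter> X) > 0"
    using support[of "ball z \<epsilon>"] assms by (metis IntI centre_in_ball empty_iff open_ball)
  moreover have "ball z \<epsilon> \<inter> X \<in> fmeasurable lebesgue"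
    by (rule fmeasurable_Int_fmeasurable) (auto simp: sets_lebesgue_compact compact)
  then have "emeasure lebesgue (ball z \<epsilon> \<inter> X) < top"
    by (meson fmeasurableD2 less_top)
  ultimately show ?thesis
    unfolding ball_measure_def measure_def by (simp add: enn2real_positive_iff)
qed

lemma norm_ball_average_diff_le:
  fixes g :: "'a \<Rightarrow> 'b::{banach,second_countable_topology}"
  assumes z: "z \<in> X" and \<epsilon>: "\<epsilon> > 0" and g: "integrable (lebesgue_on X) g"
    and close: "\<And>y. y \<in> X \<Longrightarrow> y \<in> ball z \<epsilon> \<Longrightarrow> norm (g y - v) \<le> \<delta>"
  shows "norm (ball_average X z \<epsilon> g - v) \<le> \<delta>"
proof -
  let ?m = "ball_measure X z \<epsilon>"
  let ?I = "\<lambda>f. \<integral>y. indicator (ball z \<epsilon>) y *\<^sub>R f y \<partial>lebesgue_on X"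
  have m: "?m > 0"
    by (rule ball_measure_pos[OF z \<epsilon>])
  have ind: "integrable (lebesgue_on X) (\<lambda>y. indicator (ball z \<epsilon>) y *\<^sub>R f y)"
    if "integrable (lebesgue_on X) f" for f :: "'a \<Rightarrow> 'b"
  proof (rule Bochner_Integration.integrable_bound[OF that])
    show "(\<lambda>y. indicator (ball z \<epsilon>) y *\<^sub>R f y) \<in> borel_measurable (lebesgue_on X)"
      using borel_measurable_integrable[OF that] by measurable
  qed (auto simp: indicator_def)
  have iv: "integrable (lebesgue_on X) (\<lambda>y. indicator (ball z \<epsilon>) y *\<^sub>R v)"
    using integrable_indicator_ball[OF compact] by (rule integrable_scaleR_left)
  have "?I (\<lambda>_. v) = ?m *\<^sub>R v"
    by (simp add: integrable_indicator_ball[OF compact] flip: integral_indicator_ball[OF compact])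
  then have "?I g - ?m *\<^sub>R v = ?I (\<lambda>y. g y - v)"
    by (simp add: scaleR_diff_right Bochner_Integration.integral_diff[OF ind[OF g] iv])
  also have "norm \<dots> \<le> (\<integral>y. indicator (ball z \<epsilon>) y * \<delta> \<partial>lebesgue_on X)"
  proof (rule Bochner_Integration.integral_norm_bound_integral)
    show "integrable (lebesgue_on X) (\<lambda>y. indicator (ball z \<epsilon>) y *\<^sub>R (g y - v))"
      unfolding scaleR_diff_right by (rule Bochner_Integration.integrable_diff[OF ind[OF g] iv])
    show "integrable (lebesgue_on X) (\<lambda>y. indicator (ball z \<epsilon>) y * \<delta>)"
      using integrable_indicator_ball[OF compact] by (rule integrable_mult_left)
    show "norm (indicator (ball z \<epsilon>) y *\<^sub>R (g y - v)) \<le> indicator (ball z \<epsilon>) y * \<delta>"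
      if "y \<in> space (lebesgue_on X)" for y
      using that close[of y] by (simp add: indicator_def)
  qed
  also have "\<dots> = ?m * \<delta>"
    by (simp flip: integral_indicator_ball[OF compact])
  finally have bound: "norm (?I g - ?m *\<^sub>R v) \<le> ?m * \<delta>" .
  have "ball_average X z \<epsilon> g - v = (1 / ?m) *\<^sub>R (?I g - ?m *\<^sub>R v)"
    using m by (simp add: ball_average_def scaleR_diff_right)
  then have "norm (ball_average X z \<epsilon> g - v) = norm (?I g - ?m *\<^sub>R v) / ?m"
    using m by simp
  also have "\<dots> \<le> \<delta>"
    using bound m by (simp add: divide_le_eq mult.commute)
  finally show ?thesis .
qed


lemma uniform_limit_ball_average:
  fixes G :: "'a \<times> 'a \<Rightarrow> 'b::{banach,second_countable_topology}"
  assumes G: "continuous_on (X \<times> X) G" and z: "z \<in> X"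
  shows "uniform_limit X (\<lambda>\<epsilon> x. ball_average X z \<epsilon> (\<lambda>y. G (x, y))) (\<lambda>x. G (x, z)) (at_right 0)"
proof (rule uniform_limitI)
  fix e :: real
  assume "e > 0"
  obtain d where d: "d > 0"
    "\<And>p p'. p \<in> X \<times> X \<Longrightarrow> p' \<in> X \<times> X \<Longrightarrow> dist p' p < d \<Longrightarrow> dist (G p') (G p) < e / 2"
    using compact_uniformly_continuous[OF G compact_Times[OF compact compact]] \<open>e > 0\<close>
    unfolding uniformly_continuous_on_def by (metis half_gt_zero)
  have "dist (ball_average X z \<epsilon> (\<lambda>y. G (x, y))) (G (x, z)) < e"
    if \<epsilon>: "\<epsilon> \<in> {0<..<d}" and x: "x \<in> X" for \<epsilon> x
  proof -
    have "norm (ball_average X z \<epsilon> (\<lambda>y. G (x, y)) - G (x, z)) \<le> e / 2"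
    proof (rule norm_ball_average_diff_le[OF z])
      show "integrable (lebesgue_on X) (\<lambda>y. G (x, y))"
        by (intro integrable_continuous_on_compact[OF compact] continuous_on_compose2[OF G]
            continuous_on_Pair continuous_on_const continuous_on_id) (auto simp: x)
      show "norm (G (x, y) - G (x, z)) \<le> e / 2" if "y \<in> X" "y \<in> ball z \<epsilon>" for y
        using d(2)[of "(x, z)" "(x, y)"] that x z \<epsilon>
        by (simp add: dist_Pair_Pair dist_commute dist_norm less_imp_le)
    qed (use \<epsilon> in simp)
    then show ?thesis
      using \<open>e > 0\<close> by (simp add: dist_norm)
  qed
  then show "\<forall>\<^sub>F \<epsilon> in at_right 0. \<forall>x\<in>X. dist (ball_average X z \<epsilon> (\<lambda>y. G (x, y))) (G (x, z)) < e"
    using eventually_at_right_real[OF d(1)] by (auto elim!: eventually_mono)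
qed

lemma tendsto_ball_average:
  fixes g :: "'a \<Rightarrow> 'b::{banach,second_countable_topology}"
  assumes "continuous_on X g" "z \<in> X"
  shows "((\<lambda>\<epsilon>. ball_average X z \<epsilon> g) \<longlongrightarrow> g z) (at_right 0)"
proof -
  have "continuous_on (X \<times> X) (\<lambda>p. g (snd p))"
    by (rule continuous_on_compose2[OF assms(1) continuous_on_snd]) auto
  from tendsto_uniform_limitI[OF uniform_limit_ball_average[OF this assms(2)] assms(2)]
  show ?thesis
    by simp
qed

lemma tendsto_L2_inner_ball_delta:
  assumes "continuous_on X g" "z \<in> X"
  shows "((\<lambda>\<epsilon>. L2_inner X g (ball_delta X z \<epsilon> h)) \<longlongrightarrow> cinner (g z) h) (at_right 0)"
  unfolding L2_inner_ball_delta
  by (rule tendsto_ball_average[OF _ assms(2)]) (intro continuous_intros assms(1))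

lemma integral_norm_ball_delta:
  assumes "z \<in> X" "\<epsilon> > 0"
  shows "(\<integral>y. norm (ball_delta X z \<epsilon> h y) \<partial>lebesgue_on X) = norm h"
proof -
  have m: "ball_measure X z \<epsilon> > 0"
    by (rule ball_measure_pos[OF assms])
  have "(\<integral>y. norm (ball_delta X z \<epsilon> h y) \<partial>lebesgue_on X)
      = (\<integral>y. indicator (ball z \<epsilon>) y * (norm h / ball_measure X z \<epsilon>) \<partial>lebesgue_on X)"
    using m by (intro Bochner_Integration.integral_cong) (auto simp: ball_delta_def indicator_def)
  also have "\<dots> = norm h"
    using m by (simp flip: integral_indicator_ball[OF compact])
  finally show ?thesis .
qed

lemma tendsto_L2_inner_ball_delta_uniform_limit:
  assumes z: "z \<in> X" and G: "continuous_on X G" and F: "\<And>\<epsilon>. F \<epsilon> \<in> L2 X"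
    and lim: "uniform_limit X F G (at_right 0)"
  shows "((\<lambda>\<epsilon>. L2_inner X (ball_delta X z \<epsilon> h) (F \<epsilon>)) \<longlongrightarrow> cinner h (G z)) (at_right 0)"
proof -
  let ?\<delta> = "\<lambda>\<epsilon>. ball_delta X z \<epsilon> h"
  have GL2: "G \<in> L2 X"
    by (rule L2_continuous_on[OF compact G])
  have small: "((\<lambda>\<epsilon>. L2_inner X (?\<delta> \<epsilon>) (F \<epsilon>) - L2_inner X (?\<delta> \<epsilon>) G) \<longlongrightarrow> 0) (at_right 0)"
  proof (rule tendstoI)
    fix r :: real
    assume "r > 0"
    define \<eta> where "\<eta> = r / (norm h + 1)"
    have "\<eta> > 0" "\<eta> * norm h < r"
      using \<open>r > 0\<close> by (auto simp: \<eta>_def field_simps add_pos_nonneg)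
    from uniform_limitD[OF lim \<open>\<eta> > 0\<close>] eventually_at_right_less
    show "\<forall>\<^sub>F \<epsilon> in at_right 0. dist (L2_inner X (?\<delta> \<epsilon>) (F \<epsilon>) - L2_inner X (?\<delta> \<epsilon>) G) 0 < r"
    proof eventually_elim
      case (elim \<epsilon>)
      have "cmod (L2_inner X (?\<delta> \<epsilon>) (F \<epsilon>) - L2_inner X (?\<delta> \<epsilon>) G)
          \<le> \<eta> * (\<integral>y. norm (?\<delta> \<epsilon> y) \<partial>lebesgue_on X)"
        using elim(1)
        by (intro cmod_L2_inner_diff_le[OF compact ball_delta_L2[OF compact] F GL2])
           (simp add: dist_norm less_imp_le)
      also have "\<dots> = \<eta> * norm h"
        using elim(2) by (simp add: integral_norm_ball_delta[OF z])
      finally show ?case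
        using \<open>\<eta> * norm h < r\<close> by simp
    qed
  qed
  have "((\<lambda>\<epsilon>. L2_inner X (?\<delta> \<epsilon>) G) \<longlongrightarrow> cinner h (G z)) (at_right 0)"
    using tendsto_cnj[OF tendsto_L2_inner_ball_delta[OF G z, of h]]
    by (simp add: L2_inner_commute[of X "?\<delta> _"] cinner_commute[of h])
  from tendsto_add[OF small this] show ?thesis
    by simp
qed

lemma L2_inner_uniform_limit_expansion:
  fixes \<phi> :: "nat \<Rightarrow> 'a \<Rightarrow> 'h::{complex_inner,banach,second_countable_topology}"
  assumes \<phi>: "\<And>k. continuous_on X (\<phi> k)"
    and orth: "\<And>k l. L2_inner X (\<phi> k) (\<phi> l) = (if k = l then 1 else 0)"
    and lim: "uniform_limit X (\<lambda>n y. \<Sum>l<n. scaleC (c l) (\<phi> l y)) Q sequentially"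
  shows "L2_inner X (\<phi> k) Q = c k"
proof -
  have S: "continuous_on X (\<lambda>y. \<Sum>l<n. scaleC (c l) (\<phi> l y))" for n
    by (intro continuous_intros \<phi>)
  have Q: "continuous_on X Q"
    by (rule uniform_limit_theorem[OF _ lim]) (simp_all add: S)
  have "L2_inner X (\<phi> k) (\<lambda>y. \<Sum>l<n. scaleC (c l) (\<phi> l y)) = (\<Sum>l<n. c l * (if k = l then 1 else 0))"
    for n
    by (simp add: L2_inner_sum_right L2_continuous_on[OF compact \<phi>] orth)
  also have "\<dots> n = (\<Sum>l<n. if l = k then c l else 0)" for n
    by (intro sum.cong) auto
  also have "\<dots> n = (if k < n then c k else 0)" for n
    by simp
  finally have eq: "L2_inner X (\<phi> k) (\<lambda>y. \<Sum>l<n. scaleC (c l) (\<phi> l y)) = (if k < n then c k else 0)"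
    for n .
  have "\<forall>\<^sub>F n in sequentially. L2_inner X (\<phi> k) (\<lambda>y. \<Sum>l<n. scaleC (c l) (\<phi> l y)) = c k"
    using eventually_gt_at_top[of k] by (rule eventually_mono) (simp add: eq)
  then have "(\<lambda>n. L2_inner X (\<phi> k) (\<lambda>y. \<Sum>l<n. scaleC (c l) (\<phi> l y))) \<longlonglongrightarrow> c k"
    by (rule tendsto_eventually)
  moreover have "(\<lambda>n. L2_inner X (\<phi> k) (\<lambda>y. \<Sum>l<n. scaleC (c l) (\<phi> l y))) \<longlonglongrightarrow> L2_inner X (\<phi> k) Q"
    by (intro tendsto_L2_inner_uniform_limit_right[OF compact _ _ _ lim] L2_continuous_on[OF compact]
        \<phi> S Q)
  ultimately show ?thesis
    by (rule LIMSEQ_unique[symmetric])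
qed

lemma L2_inner_uniform_limit_expansion_orthogonal:
  fixes \<phi> :: "nat \<Rightarrow> 'a \<Rightarrow> 'h::{complex_inner,banach,second_countable_topology}"
  assumes \<phi>: "\<And>k. continuous_on X (\<phi> k)"
    and lim: "uniform_limit X (\<lambda>n y. \<Sum>l<n. scaleC (c l) (\<phi> l y)) Q sequentially"
    and u: "u \<in> L2 X" "\<And>l. L2_inner X (\<phi> l) u = 0"
  shows "L2_inner X Q u = 0"
proof -
  have S: "continuous_on X (\<lambda>y. \<Sum>l<n. scaleC (c l) (\<phi> l y))" for n
    by (intro continuous_intros \<phi>)
  have Q: "continuous_on X Q"
    by (rule uniform_limit_theorem[OF _ lim]) (simp_all add: S)
  have "(\<lambda>n. L2_inner X (\<lambda>y. \<Sum>l<n. scaleC (c l) (\<phi> l y)) u) \<longlonglongrightarrow> L2_inner X Q u"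
    by (intro tendsto_L2_inner_uniform_limit_left[OF compact u(1) _ _ lim] L2_continuous_on[OF compact]
        S Q)
  moreover have "L2_inner X (\<lambda>y. \<Sum>l<n. scaleC (c l) (\<phi> l y)) u = 0" for n
    by (simp add: L2_inner_sum_left L2_continuous_on[OF compact \<phi>] u)
  ultimately show ?thesis
    by (simp add: LIMSEQ_const_iff)
qed

end

section \<open>Continuous kernels and their eigenfunction expansions\<close>

lemma norm_apply_diff_le_hs_norm:
  fixes A B :: "'h::{complex_inner,banach} \<Rightarrow> 'h"
  assumes A: "hilbert_schmidt A" and B: "hilbert_schmidt B"
  shows "norm (A v - B w) \<le> hs_norm (\<lambda>h. A h - B h) * norm v + hs_norm B * norm (v - w)"
proof -
  have "A v - B w = (A v - B v) + B (v - w)"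
    by (simp add: linear_diff[OF bounded_linear.linear[OF bounded_linear_hilbert_schmidt[OF B]]])
  also have "norm \<dots> \<le> norm (A v - B v) + norm (B (v - w))"
    by (rule norm_triangle_ineq)
  also have "\<dots> \<le> hs_norm (\<lambda>h. A h - B h) * norm v + hs_norm B * norm (v - w)"
    using norm_apply_le_hs_norm[OF hilbert_schmidt_diff[OF A B], of v] norm_apply_le_hs_norm[OF B]
    by (intro add_mono) simp_all
  finally show ?thesis .
qed

lemma continuous_on_hilbert_schmidt_apply:
  fixes A :: "'s::metric_space \<Rightarrow> 'h::{complex_inner,banach} \<Rightarrow> 'h"
  assumes hs: "\<And>p. p \<in> S \<Longrightarrow> hilbert_schmidt (A p)"
    and cont: "\<And>p e. p \<in> S \<Longrightarrow> e > 0 \<Longrightarrow>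
      \<exists>d>0. \<forall>p'\<in>S. dist p' p < d \<longrightarrow> hs_norm (\<lambda>h. A p' h - A p h) < e"
    and w: "continuous_on S w"
  shows "continuous_on S (\<lambda>p. A p (w p))"
  unfolding continuous_on_iff
proof (intro ballI allI impI)
  fix p and e :: real
  assume p: "p \<in> S" and "e > 0"
  define M where "M = hs_norm (A p)"
  define W where "W = norm (w p) + 1"
  define \<eta> where "\<eta> = min 1 (e / (2 * (M + 1)))"
  have "W > 0"
    by (simp add: W_def add_nonneg_pos)
  have "M \<ge> 0" "\<eta> > 0" "M * \<eta> < e / 2"
    using \<open>e > 0\<close> hs_norm_nonneg[of "A p"] by (auto simp: M_def \<eta>_def min_def field_simps)
  obtain d1 where d1: "d1 > 0" "\<And>p'. p' \<in> S \<Longrightarrow> dist p' p < d1 \<Longrightarrow> norm (w p' - w p) < \<eta>"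
    using w p \<open>\<eta> > 0\<close> unfolding continuous_on_iff dist_norm by blast
  obtain d2 where d2: "d2 > 0"
    "\<And>p'. p' \<in> S \<Longrightarrow> dist p' p < d2 \<Longrightarrow> hs_norm (\<lambda>h. A p' h - A p h) < e / (2 * W)"
    using cont[OF p, of "e / (2 * W)"] \<open>e > 0\<close> \<open>W > 0\<close> by auto
  have "dist (A p' (w p')) (A p (w p)) < e" if p': "p' \<in> S" "dist p' p < min d1 d2" for p'
  proof -
    have close: "norm (w p' - w p) < \<eta>"
      using d1(2) p' by simp
    then have "norm (w p') \<le> W"
      using norm_triangle_sub[of "w p'" "w p"] by (simp add: W_def \<eta>_def)
    then have "hs_norm (\<lambda>h. A p' h - A p h) * norm (w p') \<le> e / (2 * W) * W"
      using d2(2)[of p'] p' \<open>W > 0\<close> \<open>e > 0\<close> by (intro mult_mono) simp_all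
    also have "\<dots> = e / 2"
      using \<open>W > 0\<close> by simp
    finally have "hs_norm (\<lambda>h. A p' h - A p h) * norm (w p') \<le> e / 2" .
    moreover have "M * norm (w p' - w p) \<le> M * \<eta>"
      using close \<open>M \<ge> 0\<close> by (simp add: mult_left_mono)
    ultimately show ?thesis
      using norm_apply_diff_le_hs_norm[OF hs[OF p'(1)] hs[OF p], of "w p'" "w p"] \<open>M * \<eta> < e / 2\<close>
      unfolding dist_norm M_def by linarith
  qed
  then show "\<exists>d>0. \<forall>p'\<in>S. dist p' p < d \<longrightarrow> dist (A p' (w p')) (A p (w p)) < e"
    using d1(1) d2(1) by (intro exI[of _ "min d1 d2"]) auto
qed

lemma uniform_limit_apply_of_hs_norm:
  fixes S :: "nat \<Rightarrow> 's \<Rightarrow> 'h::{complex_inner,banach} \<Rightarrow> 'h" and R :: "'s \<Rightarrow> 'h \<Rightarrow> 'h"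
  assumes hs: "\<And>n x. x \<in> A \<Longrightarrow> hilbert_schmidt (\<lambda>h. S n x h - R x h)"
    and lim: "\<forall>e>0. \<exists>N. \<forall>n\<ge>N. \<forall>x\<in>A. hs_norm (\<lambda>h. S n x h - R x h) < e"
  shows "uniform_limit A (\<lambda>n x. S n x h) (\<lambda>x. R x h) sequentially"
  unfolding uniform_limit_sequentially_iff
proof (intro allI impI)
  fix r :: real
  assume "r > 0"
  define e where "e = r / (norm h + 1)"
  have "e > 0" "e * norm h < r"
    using \<open>r > 0\<close> by (auto simp: e_def field_simps add_pos_nonneg)
  then obtain N where N: "\<And>n x. n \<ge> N \<Longrightarrow> x \<in> A \<Longrightarrow> hs_norm (\<lambda>h. S n x h - R x h) < e"
    using lim by blast
  have "dist (S n x h) (R x h) < r" if "n \<ge> N" "x \<in> A" for n x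
  proof -
    have "norm (S n x h - R x h) \<le> hs_norm (\<lambda>h. S n x h - R x h) * norm h"
      using norm_apply_le_hs_norm[OF hs[OF that(2)]] by simp
    also have "\<dots> \<le> e * norm h"
      using N[OF that] by (intro mult_right_mono) simp_all
    finally show ?thesis
      using \<open>e * norm h < r\<close> by (simp add: dist_norm)
  qed
  then show "\<exists>N. \<forall>n\<ge>N. \<forall>x\<in>A. dist (S n x h) (R x h) < r"
    by blast
qed

lemma norm_le_if_cinner_eq_cinner_apply:
  fixes s a :: "'a::complex_inner"
  assumes eq: "\<And>v. cinner s v = cinner a (T v)" and T: "\<And>v. norm (T v) \<le> c * norm v"
    and "c \<ge> 0"
  shows "norm s \<le> c * norm a"
proof (cases "s = 0")
  case False
  have "norm s * norm s = cmod (cinner a (T s))"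
    unfolding eq[symmetric] cinner_self norm_of_real by (simp add: power2_eq_square)
  also have "\<dots> \<le> norm a * (c * norm s)"
    using norm_cinner_le[of a "T s"] T[of s] by (meson mult_left_mono norm_ge_zero order_trans)
  finally show ?thesis
    using False by (simp add: algebra_simps mult_le_cancel_left_pos)
qed (use \<open>c \<ge> 0\<close> in simp)

locale kernel_eigensystem = compact_domain X
  for X :: "'a::euclidean_space set" +
  fixes P :: "'a \<Rightarrow> 'a \<Rightarrow> 'h::{complex_inner,banach,second_countable_topology} \<Rightarrow> 'h"
    and lam :: "nat \<Rightarrow> real"
    and \<phi> :: "nat \<Rightarrow> 'a \<Rightarrow> 'h"
  assumes P_hs: "\<And>x y. x \<in> X \<Longrightarrow> y \<in> X \<Longrightarrow> hilbert_schmidt (P x y)"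
    and P_cont: "\<And>x y e. x \<in> X \<Longrightarrow> y \<in> X \<Longrightarrow> e > 0 \<Longrightarrow>
        \<exists>d>0. \<forall>x'\<in>X. \<forall>y'\<in>X. dist (x', y') (x, y) < d \<longrightarrow> hs_norm (\<lambda>h. P x' y' h - P x y h) < e"
    and P_herm: "\<And>f g. f \<in> L2 X \<Longrightarrow> g \<in> L2 X \<Longrightarrow>
        L2_inner X f (kernel_op X P g) = L2_inner X (kernel_op X P f) g"
    and phi_cont: "\<And>l. continuous_on X (\<phi> l)"
    and phi_orthonormal: "\<And>k l. L2_inner X (\<phi> k) (\<phi> l) = (if k = l then 1 else 0)"
    and eigen: "\<And>l. AE x in lebesgue_on X.
        kernel_op X P (\<phi> l) x = scaleC (complex_of_real (lam l)) (\<phi> l x)"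
    and eigen_complete: "\<And>f. f \<in> L2 X \<Longrightarrow> (\<forall>l. L2_inner X (\<phi> l) f = 0) \<Longrightarrow>
        AE x in lebesgue_on X. kernel_op X P f x = 0"
begin

lemma continuous_on_kernel_apply:
  assumes "continuous_on (X \<times> X) w"
  shows "continuous_on (X \<times> X) (\<lambda>p. P (fst p) (snd p) (w p))"
proof (rule continuous_on_hilbert_schmidt_apply[OF _ _ assms])
  show "hilbert_schmidt (P (fst p) (snd p))" if "p \<in> X \<times> X" for p
    using that by (auto intro: P_hs)
  fix p and e :: real
  assume "p \<in> X \<times> X" "e > 0"
  then obtain x y where p: "p = (x, y)" "x \<in> X" "y \<in> X"
    by auto
  then obtain d where "d > 0"
    "\<forall>x'\<in>X. \<forall>y'\<in>X. dist (x', y') (x, y) < d \<longrightarrow> hs_norm (\<lambda>h. P x' y' h - P x y h) < e"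
    using P_cont[OF p(2,3) \<open>e > 0\<close>] by blast
  then show "\<exists>d>0. \<forall>p'\<in>X \<times> X. dist p' p < d \<longrightarrow>
      hs_norm (\<lambda>h. P (fst p') (snd p') h - P (fst p) (snd p) h) < e"
    by (intro exI[of _ d]) (auto simp: p(1))
qed

lemma continuous_on_kernel_column:
  assumes "z \<in> X"
  shows "continuous_on X (\<lambda>y. P y z h)"
proof -
  have "continuous_on X (\<lambda>y. (\<lambda>p. P (fst p) (snd p) h) (y, z))"
    by (rule continuous_on_compose2[OF continuous_on_kernel_apply])
       (auto intro: continuous_on_Pair continuous_on_id continuous_on_const simp: assms)
  then show ?thesis
    by simp
qed

lemma continuous_on_kernel_op:
  assumes w: "continuous_on X w"
  shows "continuous_on X (kernel_op X P w)"
proof -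
  have "continuous_on (X \<times> X) (\<lambda>p. P (fst p) (snd p) (w (snd p)))"
    by (intro continuous_on_kernel_apply continuous_on_compose2[OF w continuous_on_snd]) auto
  from continuous_on_integral_kernel[OF compact this, of "\<lambda>_. 1" 1]
  show ?thesis
    by (simp add: kernel_op_def)
qed

lemma kernel_op_eigenfunction:
  assumes "x \<in> X"
  shows "kernel_op X P (\<phi> l) x = scaleC (complex_of_real (lam l)) (\<phi> l x)"
proof -
  have "continuous_on X (\<lambda>x. kernel_op X P (\<phi> l) x - scaleC (complex_of_real (lam l)) (\<phi> l x))"
    by (intro continuous_intros continuous_on_kernel_op phi_cont)
  moreover have "AE x in lebesgue_on X.
      kernel_op X P (\<phi> l) x - scaleC (complex_of_real (lam l)) (\<phi> l x) = 0"
    using eigen[of l] by eventually_elim simp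
  ultimately have "kernel_op X P (\<phi> l) x - scaleC (complex_of_real (lam l)) (\<phi> l x) = 0"
    by (rule AE_zero_imp_zero[OF _ _ assms])
  then show ?thesis
    by simp
qed

lemma kernel_op_ball_delta:
  assumes "x \<in> X"
  shows "kernel_op X P (ball_delta X z \<epsilon> h) x =
    (\<integral>y. (indicator (ball z \<epsilon>) y / ball_measure X z \<epsilon>) *\<^sub>R P x y h \<partial>lebesgue_on X)"
  unfolding kernel_op_def ball_delta_def
proof (rule Bochner_Integration.integral_cong)
  fix y
  assume "y \<in> space (lebesgue_on X)"
  then have "linear (P x y)"
    using assms P_hs by (simp add: bounded_linear.linear bounded_linear_hilbert_schmidt)
  then show "P x y ((indicator (ball z \<epsilon>) y / ball_measure X z \<epsilon>) *\<^sub>R h) =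
      (indicator (ball z \<epsilon>) y / ball_measure X z \<epsilon>) *\<^sub>R P x y h"
    by (rule linear_scale)
qed simp

lemma kernel_op_ball_delta_L2: "kernel_op X P (ball_delta X z \<epsilon> h) \<in> L2 X"
proof -
  have "continuous_on (X \<times> X) (\<lambda>p. P (fst p) (snd p) h)"
    by (rule continuous_on_kernel_apply) simp
  then have "continuous_on X (\<lambda>x. \<integral>y. (indicator (ball z \<epsilon>) y / ball_measure X z \<epsilon>) *\<^sub>R
      (\<lambda>p. P (fst p) (snd p) h) (x, y) \<partial>lebesgue_on X)"
    by (rule continuous_on_integral_kernel[OF compact, where S="1 / \<bar>ball_measure X z \<epsilon>\<bar>"])
       (measurable, simp add: indicator_def)
  then have "continuous_on X (kernel_op X P (ball_delta X z \<epsilon> h))"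
    by (rule continuous_on_eq) (simp add: kernel_op_ball_delta)
  then show ?thesis
    by (rule L2_continuous_on[OF compact])
qed

lemma uniform_limit_kernel_op_ball_delta:
  assumes "z \<in> X"
  shows "uniform_limit X (\<lambda>\<epsilon>. kernel_op X P (ball_delta X z \<epsilon> h)) (\<lambda>x. P x z h) (at_right 0)"
proof -
  have "continuous_on (X \<times> X) (\<lambda>p. P (fst p) (snd p) h)"
    by (rule continuous_on_kernel_apply) simp
  from uniform_limit_ball_average[OF this assms]
  have "uniform_limit X (\<lambda>\<epsilon> x. ball_average X z \<epsilon> (\<lambda>y. P x y h)) (\<lambda>x. P x z h) (at_right 0)"
    by simp
  moreover have "ball_average X z \<epsilon> (\<lambda>y. P x y h) = kernel_op X P (ball_delta X z \<epsilon> h) x"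
    if "x \<in> X" for \<epsilon> x
    using that by (simp add: kernel_op_ball_delta ball_average_def flip: integral_scaleR_right)
  ultimately show ?thesis
    by (simp cong: uniform_limit_cong')
qed

lemma kernel_hermitian:
  assumes x: "x \<in> X" and y: "y \<in> X"
  shows "cinner a (P x y b) = cinner (P y x a) b"
proof -
  let ?f = "\<lambda>\<epsilon>. ball_delta X x \<epsilon> a" and ?g = "\<lambda>\<epsilon>. ball_delta X y \<epsilon> b"
  have "((\<lambda>\<epsilon>. L2_inner X (?f \<epsilon>) (kernel_op X P (?g \<epsilon>))) \<longlongrightarrow> cinner a (P x y b)) (at_right 0)"
    by (intro tendsto_L2_inner_ball_delta_uniform_limit x continuous_on_kernel_column y
        kernel_op_ball_delta_L2 uniform_limit_kernel_op_ball_delta)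
  moreover have "((\<lambda>\<epsilon>. L2_inner X (?f \<epsilon>) (kernel_op X P (?g \<epsilon>))) \<longlongrightarrow> cinner (P y x a) b) (at_right 0)"
  proof -
    have "((\<lambda>\<epsilon>. L2_inner X (?g \<epsilon>) (kernel_op X P (?f \<epsilon>))) \<longlongrightarrow> cinner b (P y x a)) (at_right 0)"
      by (intro tendsto_L2_inner_ball_delta_uniform_limit x continuous_on_kernel_column y
          kernel_op_ball_delta_L2 uniform_limit_kernel_op_ball_delta)
    from tendsto_cnj[OF this] show ?thesis
      by (simp add: L2_inner_commute[of X "?g _"] P_herm ball_delta_L2[OF compact]
          cinner_commute[of b])
  qed
  ultimately show ?thesis
    by (rule tendsto_unique[OF trivial_limit_at_right_real])
qed

lemma L2_inner_eigenfunction_kernel_column: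
  assumes z: "z \<in> X"
  shows "L2_inner X (\<phi> l) (\<lambda>y. P y z h) = complex_of_real (lam l) * cinner (\<phi> l z) h"
proof -
  let ?K = "\<lambda>\<epsilon>. kernel_op X P (ball_delta X z \<epsilon> h)"
  have "L2_inner X (\<phi> l) (?K \<epsilon>) = complex_of_real (lam l) * L2_inner X (\<phi> l) (ball_delta X z \<epsilon> h)"
    for \<epsilon>
  proof -
    have "L2_inner X (\<phi> l) (?K \<epsilon>) = L2_inner X (kernel_op X P (\<phi> l)) (ball_delta X z \<epsilon> h)"
      by (rule P_herm[OF L2_continuous_on[OF compact phi_cont] ball_delta_L2[OF compact]])
    also have "\<dots> = L2_inner X (\<lambda>x. scaleC (complex_of_real (lam l)) (\<phi> l x)) (ball_delta X z \<epsilon> h)"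
      unfolding L2_inner_def by (rule Bochner_Integration.integral_cong) (simp_all add: kernel_op_eigenfunction)
    finally show ?thesis
      by (simp add: L2_inner_def cinner_scaleC_left)
  qed
  then have "((\<lambda>\<epsilon>. L2_inner X (\<phi> l) (?K \<epsilon>)) \<longlongrightarrow> complex_of_real (lam l) * cinner (\<phi> l z) h) (at_right 0)"
    by (simp add: tendsto_mult_left tendsto_L2_inner_ball_delta[OF phi_cont z])
  moreover have "((\<lambda>\<epsilon>. L2_inner X (\<phi> l) (?K \<epsilon>)) \<longlongrightarrow> L2_inner X (\<phi> l) (\<lambda>y. P y z h)) (at_right 0)"
    by (intro tendsto_L2_inner_uniform_limit_right[OF compact] L2_continuous_on[OF compact]
        phi_cont continuous_on_kernel_column z kernel_op_ball_delta_L2 uniform_limit_kernel_op_ball_delta)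
  ultimately show ?thesis
    by (rule tendsto_unique[OF trivial_limit_at_right_real, symmetric])
qed

lemma L2_inner_kernel_column_orthogonal:
  assumes z: "z \<in> X" and u: "continuous_on X u" and orth: "\<And>l. L2_inner X (\<phi> l) u = 0"
  shows "L2_inner X (\<lambda>y. P y z h) u = 0"
proof -
  let ?K = "\<lambda>\<epsilon>. kernel_op X P (ball_delta X z \<epsilon> h)"
  have uL2: "u \<in> L2 X"
    by (rule L2_continuous_on[OF compact u])
  have "AE x in lebesgue_on X. kernel_op X P u x = 0"
    using eigen_complete[OF uL2] orth by blast
  then have Pu: "kernel_op X P u x = 0" if "x \<in> X" for x
    by (rule AE_zero_imp_zero[OF continuous_on_kernel_op[OF u] _ that])
  \<comment> \<open>move \<open>P\<close> onto \<open>u\<close>, where it vanishes\<close>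
  have "L2_inner X (?K \<epsilon>) u = L2_inner X (ball_delta X z \<epsilon> h) (kernel_op X P u)" for \<epsilon>
    by (rule P_herm[OF ball_delta_L2[OF compact] uL2, symmetric])
  also have "\<dots> \<epsilon> = 0" for \<epsilon>
    unfolding L2_inner_def
    by (subst Bochner_Integration.integral_cong[where g="\<lambda>_. 0"]) (auto simp: Pu)
  finally have "((\<lambda>\<epsilon>. L2_inner X (?K \<epsilon>) u) \<longlongrightarrow> 0) (at_right 0)"
    by simp
  moreover have "((\<lambda>\<epsilon>. L2_inner X (?K \<epsilon>) u) \<longlongrightarrow> L2_inner X (\<lambda>y. P y z h) u) (at_right 0)"
    by (intro tendsto_L2_inner_uniform_limit_left[OF compact uL2] L2_continuous_on[OF compact]
        continuous_on_kernel_column z kernel_op_ball_delta_L2 uniform_limit_kernel_op_ball_delta)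
  ultimately show ?thesis
    by (rule tendsto_unique[OF trivial_limit_at_right_real, symmetric])
qed

definition partial_kernel :: "nat \<Rightarrow> 'a \<Rightarrow> 'a \<Rightarrow> 'h \<Rightarrow> 'h" where
  "partial_kernel n x y h = (\<Sum>l<n. scaleC (complex_of_real (lam l)) (rank1 (\<phi> l x) (\<phi> l y) h))"

lemma partial_kernel_apply:
  "partial_kernel n x y h = (\<Sum>l<n. scaleC (complex_of_real (lam l) * cinner (\<phi> l y) h) (\<phi> l x))"
  by (simp add: partial_kernel_def rank1_def scaleC_scaleC)

lemma cinner_partial_kernel_swap:
  "cinner (partial_kernel n y x a) v = cinner a (partial_kernel n x y v)"
  by (simp add: partial_kernel_apply cinner_sum_left cinner_sum_right cinner_scaleC_left
      cinner_scaleC_right cinner_commute[of "\<phi> _ x" a] mult_ac)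

lemma hilbert_schmidt_partial_kernel:
  assumes "x \<in> X" "y \<in> X"
  shows "hilbert_schmidt (partial_kernel n x y)"
proof -
  obtain B :: "'h set" where "is_onb B"
    using P_hs[OF assms] unfolding hilbert_schmidt_def by blast
  then show ?thesis
    unfolding partial_kernel_def
    by (intro hilbert_schmidt_sum hilbert_schmidt_scaleC hilbert_schmidt_rank1)
qed

lemma kernel_column_eq_uniform_limit:
  assumes z: "z \<in> X" and lim: "uniform_limit X (\<lambda>n y. partial_kernel n y z h) Q sequentially"
    and y: "y \<in> X"
  shows "P y z h = Q y"
proof -
  define c where "c l = complex_of_real (lam l) * cinner (\<phi> l z) h" for l
  have lim': "uniform_limit X (\<lambda>n y. \<Sum>l<n. scaleC (c l) (\<phi> l y)) Q sequentially"
    using lim by (simp add: partial_kernel_apply c_def)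
  have "continuous_on X (\<lambda>y. \<Sum>l<n. scaleC (c l) (\<phi> l y))" for n
    by (intro continuous_intros phi_cont)
  then have Q: "continuous_on X Q"
    by (intro uniform_limit_theorem[OF _ lim']) simp_all
  \<comment> \<open>\<open>u\<close> is continuous and orthogonal to every \<open>\<phi> l\<close>, hence to both \<open>P (-) z h\<close> and \<open>Q\<close>\<close>
  define u where "u = (\<lambda>y. P y z h - Q y)"
  have u: "continuous_on X u"
    unfolding u_def by (intro continuous_intros continuous_on_kernel_column z Q)
  have L2: "(\<lambda>y. P y z h) \<in> L2 X" "Q \<in> L2 X" "u \<in> L2 X"
    by (intro L2_continuous_on[OF compact] continuous_on_kernel_column z Q u)+
  have orth: "L2_inner X (\<phi> l) u = 0" for l
  proof -
    have "L2_inner X (\<phi> l) u = L2_inner X (\<phi> l) (\<lambda>y. P y z h) - L2_inner X (\<phi> l) Q"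
      unfolding u_def by (rule L2_inner_diff_right[OF L2_continuous_on[OF compact phi_cont] L2(1,2)])
    also have "\<dots> = 0"
      using L2_inner_eigenfunction_kernel_column[OF z]
        L2_inner_uniform_limit_expansion[OF phi_cont phi_orthonormal lim']
      by (simp add: c_def)
    finally show ?thesis .
  qed
  have "L2_inner X u u = L2_inner X (\<lambda>y. P y z h) u - L2_inner X Q u"
    by (subst (1) u_def) (rule L2_inner_diff_left[OF L2(3,1,2)])
  also have "\<dots> = 0"
    using L2_inner_kernel_column_orthogonal[OF z u orth]
      L2_inner_uniform_limit_expansion_orthogonal[OF phi_cont lim' L2(3) orth]
    by simp
  finally have "u y = 0"
    by (rule L2_inner_self_eq_zero_imp_zero[OF u _ y])
  then show ?thesis
    by (simp add: u_def)
qed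

lemma kernel_eq_if_uniform_in_first:
  assumes y: "y \<in> X" and R: "\<And>x. x \<in> X \<Longrightarrow> hilbert_schmidt (R x y)"
    and conv: "\<forall>e>0. \<exists>N. \<forall>n\<ge>N. \<forall>x\<in>X. hs_norm (\<lambda>h. partial_kernel n x y h - R x y h) < e"
    and x: "x \<in> X"
  shows "P x y = R x y"
proof
  fix h
  have "uniform_limit X (\<lambda>n x. partial_kernel n x y h) (\<lambda>x. R x y h) sequentially"
    using conv
    by (intro uniform_limit_apply_of_hs_norm hilbert_schmidt_diff hilbert_schmidt_partial_kernel R y)
  then show "P x y h = R x y h"
    by (rule kernel_column_eq_uniform_limit[OF y _ x])
qed

lemma uniformly_Cauchy_on_partial_kernel_swap:
  assumes x: "x \<in> X" and R: "\<And>y. y \<in> X \<Longrightarrow> hilbert_schmidt (R x y)"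
    and conv: "\<forall>e>0. \<exists>N. \<forall>n\<ge>N. \<forall>y\<in>X. hs_norm (\<lambda>h. partial_kernel n x y h - R x y h) < e"
  shows "uniformly_Cauchy_on X (\<lambda>n y. partial_kernel n y x a)"
proof (rule uniformly_Cauchy_onI)
  fix r :: real
  assume "r > 0"
  let ?D = "\<lambda>n y h. partial_kernel n x y h - R x y h"
  define e where "e = r / (2 * (norm a + 1))"
  have "e > 0" "2 * e * norm a < r"
    using \<open>r > 0\<close> by (auto simp: e_def field_simps add_pos_nonneg)
  then obtain N where N: "\<And>n y. n \<ge> N \<Longrightarrow> y \<in> X \<Longrightarrow> hs_norm (?D n y) < e"
    using conv by blast
  have D: "norm (?D n y v) \<le> e * norm v" if "n \<ge> N" "y \<in> X" for n y v
  proof -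
    have "hilbert_schmidt (?D n y)"
      by (intro hilbert_schmidt_diff hilbert_schmidt_partial_kernel R x that(2))
    then have "norm (?D n y v) \<le> hs_norm (?D n y) * norm v"
      by (rule norm_apply_le_hs_norm)
    also have "\<dots> \<le> e * norm v"
      using N[OF that] by (intro mult_right_mono) simp_all
    finally show ?thesis .
  qed
  have "dist (partial_kernel m y x a) (partial_kernel n y x a) < r"
    if "y \<in> X" "m \<ge> N" "n \<ge> N" for y m n
  proof -
    \<comment> \<open>the difference is the adjoint of \<open>?D m y - ?D n y\<close> applied to \<open>a\<close>\<close>
    have "norm (partial_kernel m y x a - partial_kernel n y x a) \<le> (2 * e) * norm a"
    proof (rule norm_le_if_cinner_eq_cinner_apply)
      show "cinner (partial_kernel m y x a - partial_kernel n y x a) v =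
          cinner a (?D m y v - ?D n y v)" for v
        by (simp add: cinner_diff_left cinner_diff_right cinner_partial_kernel_swap)
      show "norm (?D m y v - ?D n y v) \<le> 2 * e * norm v" for v
        using norm_triangle_ineq4[of "?D m y v" "?D n y v"] D[OF that(2,1), of v] D[OF that(3,1), of v]
        by simp
    qed (use \<open>e > 0\<close> in simp)
    then show ?thesis
      using \<open>2 * e * norm a < r\<close> by (simp add: dist_norm)
  qed
  then show "\<exists>M. \<forall>y\<in>X. \<forall>m\<ge>M. \<forall>n\<ge>M. dist (partial_kernel m y x a) (partial_kernel n y x a) < r"
    by blast
qed

lemma kernel_eq_if_uniform_in_second:
  assumes x: "x \<in> X" and R: "\<And>y. y \<in> X \<Longrightarrow> hilbert_schmidt (R x y)"
    and conv: "\<forall>e>0. \<exists>N. \<forall>n\<ge>N. \<forall>y\<in>X. hs_norm (\<lambda>h. partial_kernel n x y h - R x y h) < e"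
    and y: "y \<in> X"
  shows "P x y = R x y"
proof (intro ext cinner_ext)
  fix a b
  obtain Q where Q: "uniform_limit X (\<lambda>n y. partial_kernel n y x a) Q sequentially"
    using Cauchy_uniformly_convergent[OF uniformly_Cauchy_on_partial_kernel_swap[where R=R, OF x R conv]]
    unfolding uniformly_convergent_on_def by blast
  have "(\<lambda>n. cinner (partial_kernel n y x a) b) \<longlonglongrightarrow> cinner (Q y) b"
    by (intro tendsto_cinner tendsto_uniform_limitI[OF Q y] tendsto_const)
  moreover have "uniform_limit X (\<lambda>n y. partial_kernel n x y b) (\<lambda>y. R x y b) sequentially"
    using conv
    by (intro uniform_limit_apply_of_hs_norm hilbert_schmidt_diff hilbert_schmidt_partial_kernel R x)
  then have "(\<lambda>n. cinner (partial_kernel n y x a) b) \<longlonglongrightarrow> cinner a (R x y b)"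
    unfolding cinner_partial_kernel_swap by (intro tendsto_cinner tendsto_const tendsto_uniform_limitI[OF _ y])
  ultimately have "cinner (Q y) b = cinner a (R x y b)"
    by (rule LIMSEQ_unique)
  then show "cinner a (P x y b) = cinner a (R x y b)"
    using kernel_hermitian[OF x y] kernel_column_eq_uniform_limit[OF x Q y] by simp
qed

end

theorem lemma5p20:
  fixes X :: "'a::euclidean_space set"
    and P :: "'a \<Rightarrow> 'a \<Rightarrow> 'h::{complex_inner,banach,second_countable_topology} \<Rightarrow> 'h"
    and lam :: "nat \<Rightarrow> real"
    and \<phi> :: "nat \<Rightarrow> 'a \<Rightarrow> 'h"
    and R :: "'a \<Rightarrow> 'a \<Rightarrow> 'h \<Rightarrow> 'h"
  assumes X_compact: "compact X"
    and X_support: "\<And>U. open U \<Longrightarrow> U \<inter> X \<noteq> {} \<Longrightarrow> emeasure lebesgue (U \<inter> X) > 0"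
    and P_hs: "\<And>x y. x \<in> X \<Longrightarrow> y \<in> X \<Longrightarrow> hilbert_schmidt (P x y)"
    and P_cont: "\<And>x y e. x \<in> X \<Longrightarrow> y \<in> X \<Longrightarrow> e > 0 \<Longrightarrow>
        \<exists>d>0. \<forall>x'\<in>X. \<forall>y'\<in>X. dist (x', y') (x, y) < d \<longrightarrow>
                 hs_norm (\<lambda>h. P x' y' h - P x y h) < e"
    and P_herm: "\<And>f g. f \<in> L2 X \<Longrightarrow> g \<in> L2 X \<Longrightarrow>
        L2_inner X f (kernel_op X P g) = L2_inner X (kernel_op X P f) g"
    and P_nonneg: "\<And>f. f \<in> L2 X \<Longrightarrow>
        Im (L2_inner X f (kernel_op X P f)) = 0 \<and> Re (L2_inner X f (kernel_op X P f)) \<ge> 0"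
    and phi_cont: "\<And>l. continuous_on X (\<phi> l)"
    and phi_L2: "\<And>l. \<phi> l \<in> L2 X"
    and phi_orthonormal: "\<And>k l. L2_inner X (\<phi> k) (\<phi> l) = (if k = l then 1 else 0)"
    and eigen: "\<And>l. AE x in lebesgue_on X. kernel_op X P (\<phi> l) x = scaleC (complex_of_real (lam l)) (\<phi> l x)"
    and eigen_complete: "\<And>f. f \<in> L2 X \<Longrightarrow> (\<forall>l. L2_inner X (\<phi> l) f = 0) \<Longrightarrow>
        AE x in lebesgue_on X. kernel_op X P f x = 0"
    and R_hs: "\<And>x y. x \<in> X \<Longrightarrow> y \<in> X \<Longrightarrow> hilbert_schmidt (R x y)"
    and R_conv:
      "(\<forall>y\<in>X. \<forall>e>0. \<exists>N. \<forall>n\<ge>N. \<forall>x\<in>X.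
          hs_norm (\<lambda>h. (\<Sum>l<n. scaleC (complex_of_real (lam l)) (rank1 (\<phi> l x) (\<phi> l y) h)) - R x y h) < e)
     \<or> (\<forall>x\<in>X. \<forall>e>0. \<exists>N. \<forall>n\<ge>N. \<forall>y\<in>X.
          hs_norm (\<lambda>h. (\<Sum>l<n. scaleC (complex_of_real (lam l)) (rank1 (\<phi> l x) (\<phi> l y) h)) - R x y h) < e)"
  shows "\<forall>x\<in>X. \<forall>y\<in>X. P x y = R x y"
proof (intro ballI)
  fix x y
  assume x: "x \<in> X" and y: "y \<in> X"
  interpret kernel_eigensystem X P lam \<phi>
    by unfold_locales
       (fact X_compact X_support P_hs P_cont P_herm phi_cont phi_orthonormal eigen eigen_complete)+
  from R_conv[folded partial_kernel_def] show "P x y = R x y"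
  proof
    assume "\<forall>y\<in>X. \<forall>e>0. \<exists>N. \<forall>n\<ge>N. \<forall>x\<in>X. hs_norm (\<lambda>h. partial_kernel n x y h - R x y h) < e"
    then show ?thesis
      using x y R_hs by (intro kernel_eq_if_uniform_in_first) auto
  next
    assume "\<forall>x\<in>X. \<forall>e>0. \<exists>N. \<forall>n\<ge>N. \<forall>y\<in>X. hs_norm (\<lambda>h. partial_kernel n x y h - R x y h) < e"
    then show ?thesis
      using x y R_hs by (intro kernel_eq_if_uniform_in_second) auto
  qed
qed

end
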